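(* Let $(X,\|\cdot\|,\tau)$ be a complete, C-sequential Saks space with mixed topology $\gamma$, and let $(A,D(A))$ be the generator of a $\tau$-bi-continuous semigroup $(T(t))_{t\ge0}$ on $X$. Then the following are equivalent: (a) $(T(t))_{t\ge0}$ is $\gamma$-equicontinuous. (b) There is a directed system $\Gamma_\gamma$ of continuous seminorms generating $\gamma$ such that $(A,D(A))$ is $\Gamma_\gamma$-dissipative.
   Context: $(X,\|\cdot\|)$ is a Banach space and $\tau$ a Hausdorff locally convex topology on $X$ coarser than the norm topology. The mixed topology $\gamma=\gamma(\|\cdot\|,\tau)$ is the finest linear topology on $X$ coinciding with $\tau$ on $\|\cdot\|$-bounded sets with $\tau\subseteq\gamma\subseteq\tau_{\|\cdot\|}$ (Hausdorff locally convex). $(X,\|\cdot\|,\tau)$ is a Saks space if $\tau$ is generated by a directed system $\Gamma_\tau$ of continuous seminorms with $\|x\|=\sup_{p\in\Gamma_\tau}p(x)$ for all $x$; it is complete if $(X,\gamma)$ is complete, and C-sequential if every convex sequentially open subset of $(X,\gamma)$ is open. A $\tau$-bi-continuous semigroup is a family $(T(t))_{t\ge0}$ of bounded operators with $T(0)=\mathrm{id}$, $T(t+s)=T(t)T(s)$, $t\mapsto T(t)x$ $\tau$-continuous for each $x$, $\|T(t)\|\le Me^{\omega t}$ for some $M\ge1$, $\omega\in\mathbb{R}$, and such that for every $\|\cdot\|$-bounded sequence $x_n\to x$ in $\tau$ one has $T(t)(x_n-x)\to0$ in $\tau$ locally uniformly in $t\ge0$. Its generator: $D(A)=\{x:\tau\text{-}\lim_{t\to0+}\frac{T(t)x-x}{t}\text{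 exists and }\sup_{t\in(0,1]}\frac{\|T(t)x-x\|}{t}<\infty\}$, $Ax$ this limit. $(T(t))$ is $\gamma$-equicontinuous if, for a directed system $\Gamma$ of continuous seminorms generating $\gamma$, for every $p\in\Gamma$ there are $\tilde p\in\Gamma$, $C\ge0$ with $p(T(t)x)\le C\tilde p(x)$ for all $t\ge0$, $x\in X$. $A$ is $\Gamma_\gamma$-dissipative if $p((\lambda-A)x)\ge\lambda p(x)$ for all $\lambda>0$, $x\in D(A)$, $p\in\Gamma_\gamma$. *)

theory Defs
  imports "HOL-Analysis.Analysis"
begin

definition seminorm :: "('a::real_vector \<Rightarrow> real) \<Rightarrow> bool" where
  "seminorm p \<longleftrightarrow> (\<forall>x y. p (x + y) \<le> p x + p y) \<and> (\<forall>c x. p (c *\<^sub>R x) = \<bar>c\<bar> * p x)"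

definition directed_seminorms :: "('a::real_vector \<Rightarrow> real) set \<Rightarrow> bool" where
  "directed_seminorms \<Gamma> \<longleftrightarrow> \<Gamma> \<noteq> {} \<and> (\<forall>p\<in>\<Gamma>. seminorm p) \<and>
     (\<forall>p\<in>\<Gamma>. \<forall>q\<in>\<Gamma>. \<exists>r\<in>\<Gamma>. \<forall>x. p x \<le> r x \<and> q x \<le> r x)"

definition seminorm_open :: "('a::real_vector \<Rightarrow> real) set \<Rightarrow> 'a set \<Rightarrow> bool" where
  "seminorm_open \<Gamma> S \<longleftrightarrow> (\<forall>x\<in>S. \<exists>F \<epsilon>. finite F \<and> F \<subseteq> \<Gamma> \<and> \<epsilon> > 0 \<and>
       (\<forall>y. (\<forall>p\<in>F. p (y - x) < \<epsilon>) \<longrightarrow> y \<in> S))"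

definition generates :: "('a::real_vector \<Rightarrow> real) set \<Rightarrow> 'a topology \<Rightarrow> bool" where
  "generates \<Gamma> \<sigma> \<longleftrightarrow> (\<forall>S. openin \<sigma> S \<longleftrightarrow> seminorm_open \<Gamma> S)"

definition saks_space :: "('a::real_normed_vector \<Rightarrow> real) set \<Rightarrow> 'a topology \<Rightarrow> bool" where
  "saks_space \<Gamma>\<tau> \<tau> \<longleftrightarrow> directed_seminorms \<Gamma>\<tau> \<and> generates \<Gamma>\<tau> \<tau> \<and>
     (\<forall>x. norm x = (SUP p\<in>\<Gamma>\<tau>. p x))"

definition linear_topology :: "'a::real_vector topology \<Rightarrow> bool" where
  "linear_topology \<sigma> \<longleftrightarrow> topspace \<sigma> = UNIV \<and>
     continuous_map (prod_topology \<sigma> \<sigma>) \<sigma> (\<lambda>(x, y). x + y) \<and>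
     continuous_map (prod_topology euclideanreal \<sigma>) \<sigma> (\<lambda>(c, x). c *\<^sub>R x)"

definition mixed_topology :: "'a::real_normed_vector topology \<Rightarrow> 'a topology \<Rightarrow> bool" where
  "mixed_topology \<tau> \<gamma> \<longleftrightarrow>
     linear_topology \<gamma> \<and> (\<forall>B. bounded B \<longrightarrow> subtopology \<gamma> B = subtopology \<tau> B) \<and>
     (\<forall>\<sigma>. linear_topology \<sigma> \<and> (\<forall>B. bounded B \<longrightarrow> subtopology \<sigma> B = subtopology \<tau> B)
           \<longrightarrow> (\<forall>S. openin \<sigma> S \<longrightarrow> openin \<gamma> S))"

definition tvs_complete :: "'a::real_vector topology \<Rightarrow> bool" where
  "tvs_complete \<gamma> \<longleftrightarrow> (\<forall>F. F \<noteq> bot \<and>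
       (\<forall>U. openin \<gamma> U \<and> 0 \<in> U \<longrightarrow> (\<forall>\<^sub>F (x, y) in F \<times>\<^sub>F F. x - y \<in> U))
       \<longrightarrow> (\<exists>x. limitin \<gamma> id x F))"

definition sequentially_open :: "'a topology \<Rightarrow> 'a set \<Rightarrow> bool" where
  "sequentially_open \<gamma> S \<longleftrightarrow> S \<subseteq> topspace \<gamma> \<and>
     (\<forall>xs x. x \<in> S \<and> limitin \<gamma> xs x sequentially \<longrightarrow> (\<forall>\<^sub>F n in sequentially. xs n \<in> S))"

definition C_sequential :: "'a::real_vector topology \<Rightarrow> bool" where
  "C_sequential \<gamma> \<longleftrightarrow> (\<forall>S. convex S \<and> sequentially_open \<gamma> S \<longrightarrow> openin \<gamma> S)"

definition bi_continuous_semigroup ::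
  "'a::real_normed_vector topology \<Rightarrow> (real \<Rightarrow> 'a \<Rightarrow> 'a) \<Rightarrow> bool" where
  "bi_continuous_semigroup \<tau> T \<longleftrightarrow>
     (\<forall>t\<ge>0. bounded_linear (T t)) \<and> T 0 = id \<and>
     (\<forall>t\<ge>0. \<forall>s\<ge>0. T (t + s) = T t \<circ> T s) \<and>
     (\<forall>x. continuous_map (top_of_set {0..}) \<tau> (\<lambda>t. T t x)) \<and>
     (\<exists>M \<omega>. M \<ge> 1 \<and> (\<forall>t\<ge>0. onorm (T t) \<le> M * exp (\<omega> * t))) \<and>
     (\<forall>xs x. bounded (range xs) \<and> limitin \<tau> xs x sequentially \<longrightarrow>
        (\<forall>t0\<ge>0. \<forall>U. openin \<tau> U \<and> 0 \<in> U \<longrightarrow>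
           (\<forall>\<^sub>F n in sequentially. \<forall>t\<in>{0..t0}. T t (xs n - x) \<in> U)))"

definition bi_generator ::
  "'a::real_normed_vector topology \<Rightarrow> (real \<Rightarrow> 'a \<Rightarrow> 'a) \<Rightarrow> 'a set \<Rightarrow> ('a \<Rightarrow> 'a) \<Rightarrow> bool" where
  "bi_generator \<tau> T D A \<longleftrightarrow>
     D = {x. (\<exists>y. limitin \<tau> (\<lambda>t. (1 / t) *\<^sub>R (T t x - x)) y (at_right 0)) \<and>
              bdd_above ((\<lambda>t. norm (T t x - x) / t) ` {0<..1})} \<and>
     (\<forall>x\<in>D. limitin \<tau> (\<lambda>t. (1 / t) *\<^sub>R (T t x - x)) (A x) (at_right 0))"

definition equicontinuous_semigroup ::
  "'a::real_vector topology \<Rightarrow> (real \<Rightarrow> 'a \<Rightarrow> 'a) \<Rightarrow> bool" where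
  "equicontinuous_semigroup \<gamma> T \<longleftrightarrow>
     (\<exists>\<Gamma>. directed_seminorms \<Gamma> \<and> generates \<Gamma> \<gamma> \<and>
        (\<forall>p\<in>\<Gamma>. \<exists>q\<in>\<Gamma>. \<exists>C\<ge>0. \<forall>t\<ge>0. \<forall>x. p (T t x) \<le> C * q x))"

definition dissipative_wrt :: "('a::real_vector \<Rightarrow> real) set \<Rightarrow> 'a set \<Rightarrow> ('a \<Rightarrow> 'a) \<Rightarrow> bool" where
  "dissipative_wrt \<Gamma> D A \<longleftrightarrow>
     (\<forall>l>0. \<forall>x\<in>D. \<forall>p\<in>\<Gamma>. p (l *\<^sub>R x - A x) \<ge> l * p x)"

end

(*
  (a) => (b): replacing each seminorm p of an equicontinuous system by
  p'(x) = sup_{t >= 0} p (T t x) gives an equivalent system for which every T t is a contraction,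
  and contractive generators are dissipative.

  (b) => (a): for z in D, dissipativity p y <= p (y - h A y) applied along the orbit bounds the left
  Dini derivatives of s |-> p (T s z) by 0, so p (T t z) <= p z.  A general x is the limit of the
  averages (1/h) int_0^h T s x ds, which lie in D; these integrals are tau-limits of Riemann sums,
  which exist because bounded tau-Cauchy sequences converge by completeness of (X, gamma).  Being
  norm bounded, the approximations also converge in gamma, so every T t is a p-contraction.
*)

theory Submission
  imports Defs
begin

lemma seminorm_scaleR: "seminorm p \<Longrightarrow> p (c *\<^sub>R x) = \<bar>c\<bar> * p x"
  unfolding seminorm_def by blast

lemma seminorm_triangle: "seminorm p \<Longrightarrow> p (x + y) \<le> p x + p y"
  unfolding seminorm_def by blast

lemma seminorm_zero: "seminorm p \<Longrightarrow> p 0 = 0"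
  using seminorm_scaleR[of p 0 0] by simp

lemma seminorm_minus: "seminorm p \<Longrightarrow> p (- x) = p x"
  using seminorm_scaleR[of p "-1" x] by simp

lemma seminorm_minus_commute: "seminorm p \<Longrightarrow> p (x - y) = p (y - x)"
  using seminorm_minus[of p "y - x"] by simp

lemma seminorm_nonneg: "seminorm p \<Longrightarrow> 0 \<le> p x"
  using seminorm_triangle[of p x "- x"] seminorm_zero[of p] seminorm_minus[of p x] by simp

lemma seminorm_diff_le: "seminorm p \<Longrightarrow> p (x - y) \<le> p x + p y"
  using seminorm_triangle[of p x "- y"] seminorm_minus[of p y] by simp

lemma seminorm_diff_triangle: "seminorm p \<Longrightarrow> p (x - z) \<le> p (x - y) + p (y - z)"
  using seminorm_triangle[of p "x - y" "y - z"] by simp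

lemma seminorm_reverse_triangle: "seminorm p \<Longrightarrow> \<bar>p x - p y\<bar> \<le> p (x - y)"
  using seminorm_diff_triangle[of p x 0 y] seminorm_diff_triangle[of p y 0 x]
    seminorm_minus_commute[of p x y] by simp

lemma seminorm_sum_le: "seminorm p \<Longrightarrow> p (sum f S) \<le> (\<Sum>i\<in>S. p (f i))"
proof (induction S rule: infinite_finite_induct)
  case (insert x F)
  then show ?case using seminorm_triangle[of p "f x" "sum f F"] by simp
qed (simp_all add: seminorm_zero)

lemma seminorm_tendsto_shift:
  assumes "seminorm p" and "((\<lambda>a. p (f a - y)) \<longlongrightarrow> 0) F"
  shows "((\<lambda>a. p (f a - w)) \<longlongrightarrow> p (y - w)) F"
proof (rule tendsto_sandwich[where f = "\<lambda>a. p (y - w) - p (f a - y)"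
    and h = "\<lambda>a. p (y - w) + p (f a - y)"])
  have "p (y - w) - p (f a - y) \<le> p (f a - w) \<and> p (f a - w) \<le> p (y - w) + p (f a - y)" for a
    using seminorm_reverse_triangle[OF assms(1), of "f a - w" "y - w"] by (simp add: abs_le_iff)
  then show "\<forall>\<^sub>F a in F. p (y - w) - p (f a - y) \<le> p (f a - w)"
    and "\<forall>\<^sub>F a in F. p (f a - w) \<le> p (y - w) + p (f a - y)"
    by (auto intro: always_eventually)
qed (use tendsto_diff[OF tendsto_const assms(2)] tendsto_add[OF tendsto_const assms(2)] in simp_all)

lemma seminorm_average_deviation_le:
  assumes q: "seminorm q" and \<beta>: "\<beta> \<ge> 0"
    and c: "c \<ge> 0" "real j * c \<le> 1" "1 \<le> real j * c + c"
    and dev: "\<And>i. i < j \<Longrightarrow> q (g i) \<le> \<beta>"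
  shows "q (c *\<^sub>R (\<Sum>i<j. g i + v) - v) \<le> \<beta> + c * q v"
proof -
  have "q (\<Sum>i<j. g i) \<le> real j * \<beta>"
    using seminorm_sum_le[OF q, of g "{..<j}"] sum_mono[of "{..<j}" "\<lambda>i. q (g i)" "\<lambda>_. \<beta>"] dev
    by simp
  then have "c * q (\<Sum>i<j. g i) \<le> c * (real j * \<beta>)" using c(1) by (rule mult_left_mono)
  then have "q (c *\<^sub>R (\<Sum>i<j. g i)) \<le> (real j * c) * \<beta>"
    using seminorm_scaleR[OF q, of c] c(1) by (simp add: mult_ac)
  also have "\<dots> \<le> \<beta>" using c \<beta> by (intro mult_left_le_one_le) auto
  finally have "q (c *\<^sub>R (\<Sum>i<j. g i)) \<le> \<beta>" .
  moreover have "q ((real j * c - 1) *\<^sub>R v) \<le> c * q v"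
    using seminorm_scaleR[OF q, of "real j * c - 1" v] seminorm_nonneg[OF q, of v] c
    by (simp add: abs_if mult_right_mono)
  moreover have "c *\<^sub>R (\<Sum>i<j. g i + v) - v = c *\<^sub>R (\<Sum>i<j. g i) + (real j * c - 1) *\<^sub>R v"
    by (simp add: sum.distrib sum_constant_scaleR algebra_simps)
  ultimately show ?thesis using seminorm_triangle[OF q] by (smt (verit))
qed

lemma seminorm_norm: "seminorm norm"
  by (simp add: seminorm_def norm_triangle_ineq)

lemma seminorm_open_ball:
  assumes "\<forall>p\<in>\<Gamma>. seminorm p" and "q \<in> \<Gamma>"
  shows "seminorm_open \<Gamma> {z. q (z - y) < e}"
  unfolding seminorm_open_def
proof (intro ballI exI conjI allI impI)
  fix x assume "x \<in> {z. q (z - y) < e}"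
  then show "finite {q}" "{q} \<subseteq> \<Gamma>" "e - q (x - y) > 0" using assms by auto
  fix z assume "\<forall>p\<in>{q}. p (z - x) < e - q (x - y)"
  then show "z \<in> {z. q (z - y) < e}"
    using seminorm_diff_triangle[of q z y x] assms by auto
qed

lemma generates_topspace: "generates \<Gamma> \<sigma> \<Longrightarrow> topspace \<sigma> = UNIV"
proof -
  assume "generates \<Gamma> \<sigma>"
  moreover have "seminorm_open \<Gamma> UNIV"
    unfolding seminorm_open_def by (intro ballI exI[of _ "{}"] exI[of _ 1]) auto
  ultimately show ?thesis using openin_subset unfolding generates_def by blast
qed

lemma generates_limitin_iff:
  assumes gen: "generates \<Gamma> \<sigma>" and sn: "\<forall>p\<in>\<Gamma>. seminorm p"
  shows "limitin \<sigma> f y F \<longleftrightarrow> (\<forall>q\<in>\<Gamma>. ((\<lambda>a. q (f a - y)) \<longlongrightarrow> 0) F)"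
proof
  assume L: "limitin \<sigma> f y F"
  show "\<forall>q\<in>\<Gamma>. ((\<lambda>a. q (f a - y)) \<longlongrightarrow> 0) F"
  proof (intro ballI tendstoI)
    fix q and e :: real assume q: "q \<in> \<Gamma>" and e: "e > 0"
    have "openin \<sigma> {z. q (z - y) < e}"
      using gen seminorm_open_ball[OF sn q] by (simp add: generates_def)
    moreover have "y \<in> {z. q (z - y) < e}" using seminorm_zero[of q] sn q e by simp
    ultimately have "\<forall>\<^sub>F a in F. f a \<in> {z. q (z - y) < e}" by (rule limitinD[OF L])
    then show "\<forall>\<^sub>F a in F. dist (q (f a - y)) 0 < e"
      by eventually_elim (use seminorm_nonneg[of q] sn q in auto)
  qed
next
  assume R: "\<forall>q\<in>\<Gamma>. ((\<lambda>a. q (f a - y)) \<longlongrightarrow> 0) F"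
  show "limitin \<sigma> f y F" unfolding limitin_def
  proof (intro conjI allI impI)
    show "y \<in> topspace \<sigma>" using generates_topspace[OF gen] by simp
    fix U assume "openin \<sigma> U \<and> y \<in> U"
    then have "\<exists>G e. finite G \<and> G \<subseteq> \<Gamma> \<and> e > 0 \<and> (\<forall>z. (\<forall>p\<in>G. p (z - y) < e) \<longrightarrow> z \<in> U)"
      using gen unfolding generates_def seminorm_open_def by simp
    then obtain G e where G: "finite G" "G \<subseteq> \<Gamma>" "e > 0" "\<forall>z. (\<forall>p\<in>G. p (z - y) < e) \<longrightarrow> z \<in> U"
      by blast
    have "\<forall>p\<in>G. \<forall>\<^sub>F a in F. p (f a - y) < e"
      using G R by (metis order_tendstoD(2) subsetD)
    then have "\<forall>\<^sub>F a in F. \<forall>p\<in>G. p (f a - y) < e"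
      using G(1) by (simp add: eventually_ball_finite)
    then show "\<forall>\<^sub>F a in F. f a \<in> U"
      by eventually_elim (use G in blast)
  qed
qed

lemma seminorm_open_if_dominated:
  assumes dom: "\<forall>p\<in>\<Gamma>'. \<exists>q\<in>\<Gamma>. \<exists>C>0. \<forall>x. p x \<le> C * q x"
    and S: "seminorm_open \<Gamma>' S"
  shows "seminorm_open \<Gamma> S"
  unfolding seminorm_open_def
proof
  fix x assume "x \<in> S"
  with S have "\<exists>F e. finite F \<and> F \<subseteq> \<Gamma>' \<and> e > 0 \<and> (\<forall>y. (\<forall>p\<in>F. p (y - x) < e) \<longrightarrow> y \<in> S)"
    unfolding seminorm_open_def by (rule bspec)
  then obtain F e where F: "finite F" "F \<subseteq> \<Gamma>'" "e > 0" "\<forall>y. (\<forall>p\<in>F. p (y - x) < e) \<longrightarrow> y \<in> S"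
    by blast
  from dom obtain g where "\<forall>p\<in>\<Gamma>'. g p \<in> \<Gamma> \<and> (\<exists>C>0. \<forall>x. p x \<le> C * g p x)"
    by (metis (no_types, lifting) bchoice)
  then obtain c where gc: "\<forall>p\<in>\<Gamma>'. g p \<in> \<Gamma> \<and> c p > 0 \<and> (\<forall>x. p x \<le> c p * g p x)"
    by (metis (no_types, lifting) bchoice)
  define e' where "e' = e / (1 + sum c F)"
  have sc: "sum c F \<ge> 0" using gc F(2) by (intro sum_nonneg) (auto intro: less_imp_le)
  have e': "e' > 0" unfolding e'_def using sc F(3) by simp
  show "\<exists>F \<epsilon>. finite F \<and> F \<subseteq> \<Gamma> \<and> \<epsilon> > 0 \<and> (\<forall>y. (\<forall>p\<in>F. p (y - x) < \<epsilon>) \<longrightarrow> y \<in> S)"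
  proof (intro exI conjI allI impI)
    show "finite (g ` F)" "g ` F \<subseteq> \<Gamma>" "e' > 0" using F gc e' by auto
    fix y assume y: "\<forall>p\<in>g ` F. p (y - x) < e'"
    have "p (y - x) < e" if pF: "p \<in> F" for p
    proof -
      have cp: "c p > 0" "c p \<le> sum c F" using gc F pF
        by (auto intro!: member_le_sum intro: less_imp_le)
      have "p (y - x) \<le> c p * g p (y - x)" using gc F pF by blast
      also have "\<dots> < c p * e'" using y pF cp by simp
      also have "\<dots> \<le> sum c F * e'" using cp e' by (simp add: mult_right_mono)
      also have "\<dots> < e" unfolding e'_def using sc F(3) by (simp add: field_simps)
      finally show ?thesis .
    qed
    then show "y \<in> S" using F by blast
  qed
qed

lemma generates_if_equivalent:
  assumes "generates \<Gamma> \<sigma>"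
    and "\<forall>p\<in>\<Gamma>'. \<exists>q\<in>\<Gamma>. \<exists>C>0. \<forall>x. p x \<le> C * q x"
    and "\<forall>p\<in>\<Gamma>. \<exists>q\<in>\<Gamma>'. \<exists>C>0. \<forall>x. p x \<le> C * q x"
  shows "generates \<Gamma>' \<sigma>"
  using assms(1) seminorm_open_if_dominated[OF assms(2)] seminorm_open_if_dominated[OF assms(3)]
  unfolding generates_def by blast

lemma seminorm_Cauchy_diff_in:
  fixes S :: "nat \<Rightarrow> 'a::real_vector"
  assumes "generates \<Gamma> \<sigma>" and "openin \<sigma> V" and "0 \<in> V"
    and Cauchy: "\<forall>q\<in>\<Gamma>. \<forall>e>0. \<exists>N. \<forall>m\<ge>N. \<forall>n\<ge>N. q (S m - S n) < e"
  shows "\<exists>N. \<forall>m\<ge>N. \<forall>n\<ge>N. S m - S n \<in> V"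
proof -
  have "seminorm_open \<Gamma> V" using assms(1,2) by (simp add: generates_def)
  then have "\<exists>G e. finite G \<and> G \<subseteq> \<Gamma> \<and> e > 0 \<and> (\<forall>y. (\<forall>p\<in>G. p (y - 0) < e) \<longrightarrow> y \<in> V)"
    using assms(3) unfolding seminorm_open_def by (rule bspec)
  then obtain G e where G: "finite G" "G \<subseteq> \<Gamma>" "e > 0" "\<forall>y. (\<forall>p\<in>G. p y < e) \<longrightarrow> y \<in> V"
    by auto
  have "\<forall>p\<in>G. \<forall>\<^sub>F N in sequentially. \<forall>m\<ge>N. \<forall>n\<ge>N. p (S m - S n) < e"
  proof
    fix p assume "p \<in> G"
    then obtain N where "\<forall>m\<ge>N. \<forall>n\<ge>N. p (S m - S n) < e" using Cauchy G by blast
    then show "\<forall>\<^sub>F N in sequentially. \<forall>m\<ge>N. \<forall>n\<ge>N. p (S m - S n) < e"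
      unfolding eventually_sequentially by (intro exI[of _ N]) auto
  qed
  then have "\<forall>\<^sub>F N in sequentially. \<forall>p\<in>G. \<forall>m\<ge>N. \<forall>n\<ge>N. p (S m - S n) < e"
    using G(1) by (simp add: eventually_ball_finite)
  then show ?thesis using G(4) unfolding eventually_sequentially by blast
qed

lemma limitin_compose_filterlim:
  assumes "limitin X g l G" and "filterlim f G F"
  shows "limitin X (\<lambda>n. g (f n)) l F"
  using assms limitinD[OF assms(1)] filterlim_iff[THEN iffD1, OF assms(2)]
  unfolding limitin_def by blast

lemma left_dini_nonpos_imp_le:
  fixes \<phi> :: "real \<Rightarrow> real"
  assumes t: "t \<ge> 0" and cont: "continuous_on {0..t} \<phi>"
    and dini: "\<And>s e. s \<in> {0<..t} \<Longrightarrow> e > 0 \<Longrightarrow> \<forall>\<^sub>F h in at_right 0. \<phi> s - \<phi> (s - h) \<le> e * h"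
  shows "\<phi> t \<le> \<phi> 0"
proof -
  have main: "\<phi> t \<le> \<phi> 0 + 2 * e * t" if e: "e > 0" for e
  proof -
    define \<psi> where "\<psi> s = \<phi> s - 2 * e * s" for s
    define E where "E = {0..t} \<inter> \<psi> -` {\<psi> t..}"
    have "continuous_on {0..t} \<psi>" unfolding \<psi>_def by (intro continuous_intros cont)
    then have clE: "closed E" unfolding E_def by (rule continuous_closed_preimage) auto
    have bE: "bdd_below E" unfolding E_def by (rule bdd_belowI[of _ 0]) auto
    have "t \<in> E" unfolding E_def using t by simp
    then have mE: "Inf E \<in> E" using closed_contains_Inf[OF _ bE clE] by blast
    \<comment> \<open>the leftmost point of \<open>E\<close> is \<open>0\<close>: left of any \<open>m > 0\<close> in \<open>E\<close>, \<open>\<psi>\<close> is even larger\<close>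
    have "Inf E = 0"
    proof (rule ccontr)
      assume "Inf E \<noteq> 0"
      then have m: "Inf E \<in> {0<..t}" using mE unfolding E_def by auto
      have "\<forall>\<^sub>F h in at_right 0. \<phi> (Inf E) - \<phi> (Inf E - h) \<le> e * h \<and> h \<in> {0<..<Inf E}"
        using dini[OF m e] eventually_at_right_real[of 0 "Inf E"] m by (simp add: eventually_conj)
      then obtain h where h: "\<phi> (Inf E) - \<phi> (Inf E - h) \<le> e * h" "h \<in> {0<..<Inf E}"
        using eventually_happens'[OF trivial_limit_at_right_real] by blast
      then have "\<psi> (Inf E - h) > \<psi> (Inf E)"
        using mult_pos_pos[OF e, of h] unfolding \<psi>_def by (simp add: algebra_simps)
      then have "Inf E - h \<in> E" using h mE unfolding E_def by auto
      then show False using cInf_lower[OF _ bE] h by fastforce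
    qed
    then show ?thesis using mE unfolding E_def \<psi>_def by simp
  qed
  show ?thesis
  proof (rule field_le_epsilon)
    fix e :: real assume "e > 0"
    moreover from this have "2 * (e / (2 * t + 1)) * t \<le> e" using t by (simp add: field_simps)
    ultimately show "\<phi> t \<le> \<phi> 0 + e" using main[of "e / (2 * t + 1)"] t by simp
  qed
qed

lemma sum_shift_telescope:
  fixes f :: "nat \<Rightarrow> 'b::ab_group_add"
  shows "(\<Sum>k<N. f (k + j) - f k) = (\<Sum>i<j. f (N + i) - f i)"
proof (induction j)
  case (Suc j)
  have "(\<Sum>k<N. f (k + Suc j) - f k) = (\<Sum>k<N. f (k + j) - f k) + (\<Sum>k<N. f (Suc k + j) - f (k + j))"
    by (simp add: sum.distrib[symmetric] algebra_simps)
  also have "(\<Sum>k<N. f (Suc k + j) - f (k + j)) = f (N + j) - f j"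
    using sum_lessThan_telescope[of "\<lambda>k. f (k + j)" N] by simp
  finally show ?case using Suc by (simp add: add.commute)
qed simp

lemma node_in_interval:
  fixes h :: real
  assumes "h \<ge> 0" and "k \<le> N" and "N > 0"
  shows "real k * h / real N \<in> {0..h}"
proof -
  have "real k * h \<le> real N * h" using assms by (intro mult_right_mono) auto
  then show ?thesis using assms by (auto simp: divide_le_eq mult.commute)
qed

lemma refined_node:
  fixes h :: real
  assumes "h > 0" and "k < N1" and "j < N2"
  shows "real (k * N2 + j) * h / real (N1 * N2) \<in> {0..h}"
    and "\<bar>real k * h / real N1 - real (k * N2 + j) * h / real (N1 * N2)\<bar> < h / real N1"
proof -
  have "k * N2 + j < (k + 1) * N2" using assms by simp
  also have "\<dots> \<le> N1 * N2" using assms by (intro mult_right_mono) auto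
  finally show "real (k * N2 + j) * h / real (N1 * N2) \<in> {0..h}"
    using assms by (intro node_in_interval) auto
  have "real (k * N2 + j) * h / real (N1 * N2) - real k * h / real N1 =
      real j * h / (real N1 * real N2)"
    using assms by (simp add: field_simps)
  moreover have "real j * h / (real N1 * real N2) < h / real N1"
    using assms by (simp add: field_simps)
  moreover have "0 \<le> real j * h / (real N1 * real N2)" using assms by simp
  ultimately show "\<bar>real k * h / real N1 - real (k * N2 + j) * h / real (N1 * N2)\<bar> < h / real N1"
    by (smt (verit))
qed

lemma sum_lessThan_mult:
  fixes n k :: nat
  shows "(\<Sum>i<n * k. g i) = (\<Sum>m<n. \<Sum>j<k. g (m * k + j))"
proof -
  have "(\<Sum>i\<in>{m * k..<m * k + k}. g i) = (\<Sum>j<k. g (m * k + j))" for m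
    using sum.shift_bounds_nat_ivl[of g 0 "m * k" k] by (simp add: atLeast0LessThan add.commute)
  then show ?thesis using sum.nat_group[of g k n] by simp
qed

locale saks_bi_semigroup =
  fixes \<Gamma>\<tau> :: "('a::banach \<Rightarrow> real) set" and \<tau> \<gamma> :: "'a topology"
    and T :: "real \<Rightarrow> 'a \<Rightarrow> 'a" and D :: "'a set" and A :: "'a \<Rightarrow> 'a"
  assumes saks: "saks_space \<Gamma>\<tau> \<tau>" and mixed: "mixed_topology \<tau> \<gamma>"
    and complete: "tvs_complete \<gamma>" and semigroup: "bi_continuous_semigroup \<tau> T"
    and generator: "bi_generator \<tau> T D A"
begin

lemma seminorm_\<Gamma>\<tau>: "q \<in> \<Gamma>\<tau> \<Longrightarrow> seminorm q"
  using saks by (auto simp: saks_space_def directed_seminorms_def)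

lemma generates_\<tau>: "generates \<Gamma>\<tau> \<tau>"
  using saks by (simp add: saks_space_def)

lemma limitin_\<tau>_iff: "limitin \<tau> f y F \<longleftrightarrow> (\<forall>q\<in>\<Gamma>\<tau>. ((\<lambda>a. q (f a - y)) \<longlongrightarrow> 0) F)"
  using generates_limitin_iff[OF generates_\<tau>] seminorm_\<Gamma>\<tau> by blast

lemma openin_\<tau>_ball: "q \<in> \<Gamma>\<tau> \<Longrightarrow> openin \<tau> {z. q (z - y) < e}"
  using generates_\<tau> seminorm_open_ball[of \<Gamma>\<tau> q] seminorm_\<Gamma>\<tau> by (simp add: generates_def)

lemma norm_eq_SUP: "norm x = (SUP q\<in>\<Gamma>\<tau>. q x)"
  using saks by (simp add: saks_space_def)

text \<open>The supremum of an unbounded set of reals is a junk value, so boundedness has to be derived: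
  otherwise \<open>x\<close> and \<open>2 *\<^sub>R x\<close> would get the same norm.\<close>

lemma bdd_above_seminorms: "bdd_above ((\<lambda>q. q x) ` \<Gamma>\<tau>)"
proof (rule ccontr)
  assume nb: "\<not> bdd_above ((\<lambda>q. q x) ` \<Gamma>\<tau>)"
  have double: "q ((2::real) *\<^sub>R x) = 2 * q x" if "q \<in> \<Gamma>\<tau>" for q
    using seminorm_scaleR[OF seminorm_\<Gamma>\<tau>[OF that]] by simp
  have nb2: "\<not> bdd_above ((\<lambda>q. q ((2::real) *\<^sub>R x)) ` \<Gamma>\<tau>)"
  proof
    assume "bdd_above ((\<lambda>q. q ((2::real) *\<^sub>R x)) ` \<Gamma>\<tau>)"
    then obtain b where "\<forall>q\<in>\<Gamma>\<tau>. q ((2::real) *\<^sub>R x) \<le> b" by (auto simp: bdd_above_def)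
    then have "\<forall>q\<in>\<Gamma>\<tau>. q x \<le> b / 2" using double by fastforce
    then have "bdd_above ((\<lambda>q. q x) ` \<Gamma>\<tau>)" by (intro bdd_aboveI2[where M = "b / 2"]) auto
    then show False using nb by blast
  qed
  have upper_bounds: "(\<lambda>z. \<forall>v\<in>S. v \<le> z) = (\<lambda>z. False)" if "\<not> bdd_above S" for S :: "real set"
    using that unfolding fun_eq_iff bdd_above_def by simp
  have "Sup S1 = Sup S2" if "\<not> bdd_above S1" "\<not> bdd_above S2" for S1 S2 :: "real set"
    unfolding Sup_real_def upper_bounds[OF that(1)] upper_bounds[OF that(2)] ..
  from this[OF nb nb2] have "norm x = norm ((2::real) *\<^sub>R x)"
    unfolding norm_eq_SUP[of x] norm_eq_SUP[of "(2::real) *\<^sub>R x"] .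
  then have "x = 0" by simp
  then have "bdd_above ((\<lambda>q. q x) ` \<Gamma>\<tau>)"
    using seminorm_zero[OF seminorm_\<Gamma>\<tau>] by (intro bdd_aboveI2[where M = 0]) force
  then show False using nb by blast
qed

lemma seminorm_le_norm: "q \<in> \<Gamma>\<tau> \<Longrightarrow> q x \<le> norm x"
  unfolding norm_eq_SUP[of x] by (rule cSUP_upper[OF _ bdd_above_seminorms])

lemma norm_le_if_seminorms_le: "(\<And>q. q \<in> \<Gamma>\<tau> \<Longrightarrow> q x \<le> b) \<Longrightarrow> norm x \<le> b"
  unfolding norm_eq_SUP[of x]
  by (rule cSUP_least) (use saks in \<open>auto simp: saks_space_def directed_seminorms_def\<close>)

lemma limitin_\<tau>_unique:
  assumes "limitin \<tau> f a F" and "limitin \<tau> f b F" and "F \<noteq> bot"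
  shows "a = b"
proof -
  have "q (a - b) \<le> 0" if q: "q \<in> \<Gamma>\<tau>" for q
  proof (rule tendsto_lowerbound)
    show "((\<lambda>x. q (f x - a) + q (f x - b)) \<longlongrightarrow> 0) F"
      using tendsto_add assms(1,2) q unfolding limitin_\<tau>_iff by fastforce
    have "q (a - b) \<le> q (f x - a) + q (f x - b)" for x
      using seminorm_diff_triangle[OF seminorm_\<Gamma>\<tau>[OF q], of a b "f x"]
        seminorm_minus_commute[OF seminorm_\<Gamma>\<tau>[OF q], of a "f x"] by simp
    then show "\<forall>\<^sub>F x in F. q (a - b) \<le> q (f x - a) + q (f x - b)" by (simp add: always_eventually)
  qed fact
  then have "norm (a - b) \<le> 0" by (rule norm_le_if_seminorms_le)
  then show ?thesis by simp
qed

lemma limitin_\<tau>_scaleR_diff: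
  assumes "limitin \<tau> f a F" and "limitin \<tau> g b F"
  shows "limitin \<tau> (\<lambda>n. c *\<^sub>R (f n - g n)) (c *\<^sub>R (a - b)) F"
  unfolding limitin_\<tau>_iff
proof
  fix q assume q: "q \<in> \<Gamma>\<tau>"
  note sq = seminorm_\<Gamma>\<tau>[OF q]
  have "c *\<^sub>R (f n - g n) - c *\<^sub>R (a - b) = c *\<^sub>R ((f n - a) - (g n - b))" for n
    by (simp add: algebra_simps)
  then have le: "q (c *\<^sub>R (f n - g n) - c *\<^sub>R (a - b)) \<le> \<bar>c\<bar> * (q (f n - a) + q (g n - b))" for n
    using seminorm_scaleR[OF sq] seminorm_diff_le[OF sq] by (simp add: mult_left_mono)
  have "((\<lambda>n. q (f n - a)) \<longlongrightarrow> 0) F" "((\<lambda>n. q (g n - b)) \<longlongrightarrow> 0) F"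
    using assms q unfolding limitin_\<tau>_iff by blast+
  then have "((\<lambda>n. \<bar>c\<bar> * (q (f n - a) + q (g n - b))) \<longlongrightarrow> 0) F"
    by (intro tendsto_mult_right_zero tendsto_add_zero)
  then show "((\<lambda>n. q (c *\<^sub>R (f n - g n) - c *\<^sub>R (a - b))) \<longlongrightarrow> 0) F"
    by (rule tendsto_sandwich[rotated 2, OF tendsto_const])
      (use le seminorm_nonneg[OF sq] in \<open>simp_all add: always_eventually\<close>)
qed

lemma limitin_mixed_iff:
  assumes "bounded B" and "\<forall>\<^sub>F a in F. f a \<in> B" and "y \<in> B"
  shows "limitin \<gamma> f y F \<longleftrightarrow> limitin \<tau> f y F"
proof -
  have "subtopology \<gamma> B = subtopology \<tau> B" using mixed assms(1) by (simp add: mixed_topology_def)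
  then show ?thesis
    using assms(2,3) limitin_subtopology[of \<gamma> B f y F] limitin_subtopology[of \<tau> B f y F] by simp
qed

lemma tendsto_seminorm_if_limitin_\<tau>:
  assumes "generates \<Gamma> \<gamma>" and "\<forall>p\<in>\<Gamma>. seminorm p" and "p \<in> \<Gamma>"
    and "bounded B" and "\<forall>\<^sub>F a in F. f a \<in> B" and "y \<in> B" and "limitin \<tau> f y F"
  shows "((\<lambda>a. p (f a - y)) \<longlongrightarrow> 0) F"
  using assms generates_limitin_iff[OF assms(1,2)] limitin_mixed_iff[OF assms(4-6)] by blast

lemma bounded_Cauchy_limitin_\<tau>:
  assumes bd: "bounded (range S)"
    and Cauchy: "\<forall>q\<in>\<Gamma>\<tau>. \<forall>e>0. \<exists>N. \<forall>m\<ge>N. \<forall>n\<ge>N. q (S m - S n) < e"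
  shows "\<exists>z. limitin \<tau> S z sequentially"
proof -
  define F where "F = filtermap S sequentially"
  define B where "B = {S m - S n | m n. True}"
  obtain b where b: "\<forall>n. norm (S n) \<le> b" using bd unfolding bounded_iff by auto
  have "norm (S m - S n) \<le> b + b" for m n
    by (meson add_mono b order.trans norm_triangle_ineq4)
  then have bB: "bounded B" unfolding bounded_iff B_def by blast
  have "\<forall>\<^sub>F (x, y) in F \<times>\<^sub>F F. x - y \<in> U" if U: "openin \<gamma> U" "0 \<in> U" for U
  proof -
    \<comment> \<open>on the bounded set \<open>B\<close> of differences, the \<open>\<gamma>\<close>-open \<open>U\<close> is traced by a \<open>\<tau>\<close>-open \<open>V\<close>\<close>
    have "openin (subtopology \<gamma> B) (U \<inter> B)" using U by (auto simp: openin_subtopology)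
    then have "openin (subtopology \<tau> B) (U \<inter> B)" using mixed bB by (simp add: mixed_topology_def)
    then obtain V where V: "openin \<tau> V" "U \<inter> B = V \<inter> B" by (auto simp: openin_subtopology)
    have "0 \<in> B" unfolding B_def by (auto intro: exI[of _ 0])
    then have "0 \<in> V" using V U by blast
    then obtain N where N: "\<forall>m\<ge>N. \<forall>n\<ge>N. S m - S n \<in> V"
      using seminorm_Cauchy_diff_in[OF generates_\<tau> V(1) _ Cauchy] by blast
    show ?thesis unfolding eventually_prod_same
    proof (intro exI conjI allI impI)
      show "\<forall>\<^sub>F x in F. x \<in> S ` {N..}"
        unfolding F_def eventually_filtermap eventually_sequentially by auto
      fix x y assume "x \<in> S ` {N..}" "y \<in> S ` {N..}"
      then have "x - y \<in> V \<inter> B" using N unfolding B_def by auto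
      then show "case (x, y) of (x, y) \<Rightarrow> x - y \<in> U" using V by auto
    qed
  qed
  moreover have "F \<noteq> bot" unfolding F_def by (simp add: filtermap_bot_iff)
  ultimately obtain z where "limitin \<gamma> id z F"
    using complete unfolding tvs_complete_def by blast
  then have "limitin \<gamma> S z sequentially"
    unfolding F_def limitin_def eventually_filtermap by simp
  then have "limitin \<tau> S z sequentially"
    using limitin_mixed_iff[where B = "insert z (range S)" and f = S and y = z and F = sequentially]
      bd
    by simp
  then show ?thesis by blast
qed

lemma T_linear: "t \<ge> 0 \<Longrightarrow> linear (T t)"
  using semigroup bounded_linear.linear by (auto simp: bi_continuous_semigroup_def)

lemma T_0_apply [simp]: "T 0 z = z"
  using semigroup by (simp add: bi_continuous_semigroup_def)

lemma T_add_time: "t \<ge> 0 \<Longrightarrow> s \<ge> 0 \<Longrightarrow> T (t + s) z = T t (T s z)"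
  using semigroup by (simp add: bi_continuous_semigroup_def)

lemma T_diff: "t \<ge> 0 \<Longrightarrow> T t (a - b) = T t a - T t b"
  using T_linear linear_diff by blast

lemma T_add: "t \<ge> 0 \<Longrightarrow> T t (a + b) = T t a + T t b"
  using T_linear linear_add by blast

lemma T_scaleR: "t \<ge> 0 \<Longrightarrow> T t (c *\<^sub>R a) = c *\<^sub>R T t a"
  using T_linear linear_scale by blast

lemma T_sum: "t \<ge> 0 \<Longrightarrow> T t (sum f S) = (\<Sum>i\<in>S. T t (f i))"
  using T_linear linear_sum by blast

lemma T_norm_bound:
  obtains K where "K \<ge> 0" and "\<And>t w. 0 \<le> t \<Longrightarrow> t \<le> s \<Longrightarrow> norm (T t w) \<le> K * norm w"
proof -
  obtain M w where Mw: "M \<ge> 1" "\<forall>t\<ge>0. onorm (T t) \<le> M * exp (w * t)"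
    using semigroup by (auto simp: bi_continuous_semigroup_def)
  have "norm (T t z) \<le> M * exp (\<bar>w\<bar> * \<bar>s\<bar>) * norm z" if t: "0 \<le> t" "t \<le> s" for t z
  proof -
    have "bounded_linear (T t)" using semigroup t by (simp add: bi_continuous_semigroup_def)
    then have "norm (T t z) \<le> onorm (T t) * norm z" by (rule onorm)
    also have "\<dots> \<le> M * exp (w * t) * norm z" using Mw t by (simp add: mult_right_mono)
    also have "w * t \<le> \<bar>w\<bar> * \<bar>s\<bar>"
      using t by (metis abs_ge_self abs_mult abs_of_nonneg mult_left_mono abs_ge_zero order.trans)
    then have "M * exp (w * t) * norm z \<le> M * exp (\<bar>w\<bar> * \<bar>s\<bar>) * norm z"
      using Mw by (intro mult_right_mono) auto
    finally show ?thesis .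
  qed
  then show thesis using Mw by (intro that[of "M * exp (\<bar>w\<bar> * \<bar>s\<bar>)"]) auto
qed

lemma orbit_continuous:
  assumes "q \<in> \<Gamma>\<tau>" and "s0 \<ge> 0" and "e > 0"
  obtains d where "d > 0" and "\<And>s. s \<ge> 0 \<Longrightarrow> \<bar>s - s0\<bar> < d \<Longrightarrow> q (T s z - T s0 z) < e"
proof -
  have "continuous_map (top_of_set {0..}) \<tau> (\<lambda>t. T t z)"
    using semigroup by (simp add: bi_continuous_semigroup_def)
  then have "openin (top_of_set {0..}) {t \<in> {0::real..}. q (T t z - T s0 z) < e}"
    using openin_continuous_map_preimage[OF _ openin_\<tau>_ball[OF assms(1)]] by fastforce
  moreover have "s0 \<in> {t \<in> {0::real..}. q (T t z - T s0 z) < e}"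
    using assms seminorm_zero[OF seminorm_\<Gamma>\<tau>[OF assms(1)]] by simp
  ultimately obtain d where "d > 0" "\<forall>s\<in>{0..}. dist s s0 < d \<longrightarrow> q (T s z - T s0 z) < e"
    unfolding openin_euclidean_subtopology_iff by blast
  then show thesis by (intro that[of d]) (auto simp: dist_real_def)
qed

lemma orbit_uniformly_continuous:
  assumes q: "q \<in> \<Gamma>\<tau>" and "c \<ge> 0" and e: "e > 0"
  obtains d where "d > 0" and "\<forall>s\<in>{0..c}. \<forall>s'\<in>{0..c}. \<bar>s - s'\<bar> < d \<longrightarrow> q (T s x - T s' x) < e"
proof -
  have "\<exists>d>0. \<forall>s\<in>{0..c}. \<forall>s'\<in>{0..c}. \<bar>s - s'\<bar> < d \<longrightarrow> q (T s x - T s' x) < e"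
  proof (rule ccontr)
    assume "\<not> ?thesis"
    then have "\<forall>n. \<exists>s s'. s \<in> {0..c} \<and> s' \<in> {0..c} \<and> \<bar>s - s'\<bar> < inverse (real (Suc n)) \<and>
        q (T s x - T s' x) \<ge> e"
      by (metis not_le inverse_positive_iff_positive of_nat_0_less_iff zero_less_Suc)
    then obtain a b where ab: "\<And>n. a n \<in> {0..c}" "\<And>n. b n \<in> {0..c}"
      "\<And>n. \<bar>a n - b n\<bar> < inverse (real (Suc n))" "\<And>n. q (T (a n) x - T (b n) x) \<ge> e"
      by metis
    obtain l r where lr: "l \<in> {0..c}" "strict_mono (r :: nat \<Rightarrow> nat)" "(a \<circ> r) \<longlonglongrightarrow> l"
      using seq_compactE[OF compact_imp_seq_compact[OF compact_Icc]] ab(1) by metis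
    have la: "(\<lambda>n. a (r n)) \<longlonglongrightarrow> l" using lr(3) by (simp add: o_def)
    have "(\<lambda>n. b (r n) - a (r n)) \<longlonglongrightarrow> 0"
    proof (rule Lim_null_comparison[OF always_eventually LIMSEQ_inverse_real_of_nat], intro allI)
      fix n
      have "\<bar>a (r n) - b (r n)\<bar> < inverse (real (Suc (r n)))" by (rule ab(3))
      also have "\<dots> \<le> inverse (real (Suc n))"
        using seq_suble[OF lr(2), of n] by (simp add: field_simps)
      finally show "norm (b (r n) - a (r n)) \<le> inverse (real (Suc n))" by simp
    qed
    from tendsto_add[OF la this] have lb: "(\<lambda>n. b (r n)) \<longlonglongrightarrow> l" by simp
    obtain d where d: "d > 0" "\<And>s. s \<ge> 0 \<Longrightarrow> \<bar>s - l\<bar> < d \<Longrightarrow> q (T s x - T l x) < e / 2"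
      using orbit_continuous[OF q _ half_gt_zero[OF e], of l] lr(1) by auto
    obtain n where n: "dist (a (r n)) l < d" "dist (b (r n)) l < d"
      using eventually_happens[OF eventually_conj[OF tendstoD[OF la d(1)] tendstoD[OF lb d(1)]]]
      by auto
    have "q (T (a (r n)) x - T (b (r n)) x) \<le> q (T (a (r n)) x - T l x) + q (T l x - T (b (r n)) x)"
      by (rule seminorm_diff_triangle[OF seminorm_\<Gamma>\<tau>[OF q]])
    also have "\<dots> < e / 2 + e / 2"
      using d(2)[of "a (r n)"] d(2)[of "b (r n)"] n ab(1,2)[of "r n"]
        seminorm_minus_commute[OF seminorm_\<Gamma>\<tau>[OF q], of "T l x"]
      by (auto simp: dist_real_def)
    finally show False using ab(4)[of "r n"] by simp
  qed
  then show thesis using that by blast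
qed

lemma bi_continuity:
  assumes "bounded (range xs)" and "limitin \<tau> xs x sequentially" and "t0 \<ge> 0"
    and "q \<in> \<Gamma>\<tau>" and "e > 0"
  shows "\<forall>\<^sub>F n in sequentially. \<forall>t\<in>{0..t0}. q (T t (xs n - x)) < e"
proof -
  have "\<forall>xs x. bounded (range xs) \<and> limitin \<tau> xs x sequentially \<longrightarrow>
        (\<forall>t0\<ge>0. \<forall>U. openin \<tau> U \<and> 0 \<in> U \<longrightarrow>
           (\<forall>\<^sub>F n in sequentially. \<forall>t\<in>{0..t0}. T t (xs n - x) \<in> U))"
    using semigroup by (simp add: bi_continuous_semigroup_def)
  moreover have "openin \<tau> {z. q z < e}" "0 \<in> {z. q z < e}"
    using openin_\<tau>_ball[OF assms(4), of 0 e] seminorm_zero[OF seminorm_\<Gamma>\<tau>[OF assms(4)]] assms(5)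
    by auto
  ultimately have "\<forall>\<^sub>F n in sequentially. \<forall>t\<in>{0..t0}. T t (xs n - x) \<in> {z. q z < e}"
    using assms(1-3) by blast
  then show ?thesis by simp
qed

lemma limitin_T:
  assumes "bounded (range xs)" and "limitin \<tau> xs x sequentially" and t: "t \<ge> 0"
  shows "limitin \<tau> (\<lambda>n. T t (xs n)) (T t x) sequentially"
  unfolding limitin_\<tau>_iff
proof (intro ballI tendstoI)
  fix q and e :: real assume "q \<in> \<Gamma>\<tau>" "e > 0"
  from bi_continuity[OF assms(1,2) t this]
  show "\<forall>\<^sub>F n in sequentially. dist (q (T t (xs n) - T t x)) 0 < e"
  proof eventually_elim
    case (elim n)
    then have "q (T t (xs n - x)) < e" using t by auto
    then show ?case using T_diff[OF t] seminorm_nonneg[OF seminorm_\<Gamma>\<tau>[OF \<open>q \<in> \<Gamma>\<tau>\<close>]] by simp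
  qed
qed

text \<open>Bi-continuity is locally uniform in time, so the time may move with \<open>h\<close>.\<close>

lemma tendsto_T_moving_time:
  fixes g :: "real \<Rightarrow> 'a"
  assumes L: "limitin \<tau> g y (at_right 0)" and b: "\<And>h. h \<in> {0<..1} \<Longrightarrow> norm (g h) \<le> b"
    and q: "q \<in> \<Gamma>\<tau>" and \<sigma>: "\<forall>\<^sub>F h in at_right 0. \<sigma> h \<in> {0..s}"
  shows "((\<lambda>h. q (T (\<sigma> h) (g h - y))) \<longlongrightarrow> 0) (at_right 0)"
proof (rule tendsto_at_right_sequentially[of 0 1])
  fix S :: "nat \<Rightarrow> real" assume S: "\<And>n. 0 < S n" "\<And>n. S n < 1" "S \<longlonglongrightarrow> 0"
  then have S': "filterlim S (at_right 0) sequentially"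
    by (intro tendsto_imp_filterlim_at_right) auto
  have "S n \<in> {0<..1}" for n using S(1,2)[of n] by auto
  then have "bounded (range (\<lambda>n. g (S n)))" unfolding bounded_iff using b by blast
  moreover have "limitin \<tau> (\<lambda>n. g (S n)) y sequentially"
    by (rule limitin_compose_filterlim[OF L S'])
  moreover have "s \<ge> 0" using eventually_happens'[OF trivial_limit_at_right_real \<sigma>] by auto
  ultimately have ev: "\<forall>\<^sub>F n in sequentially. \<forall>t\<in>{0..s}. q (T t (g (S n) - y)) < e" if "e > 0" for e
    using bi_continuity[OF _ _ _ q that] by blast
  show "(\<lambda>n. q (T (\<sigma> (S n)) (g (S n) - y))) \<longlonglongrightarrow> 0"
  proof (rule tendstoI)
    fix e :: real assume "e > 0"
    from ev[OF this] eventually_compose_filterlim[OF \<sigma> S']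
    show "\<forall>\<^sub>F n in sequentially. dist (q (T (\<sigma> (S n)) (g (S n) - y))) 0 < e"
      by eventually_elim (use seminorm_nonneg[OF seminorm_\<Gamma>\<tau>[OF q]] in auto)
  qed
qed simp

lemma limitin_T_at_right:
  fixes g :: "real \<Rightarrow> 'a"
  assumes L: "limitin \<tau> g y (at_right 0)" and b: "\<And>h. h \<in> {0<..1} \<Longrightarrow> norm (g h) \<le> b"
    and s: "s \<ge> 0"
  shows "limitin \<tau> (\<lambda>h. T s (g h)) (T s y) (at_right 0)"
  unfolding limitin_\<tau>_iff
proof
  fix q assume "q \<in> \<Gamma>\<tau>"
  from tendsto_T_moving_time[OF L b this, of "\<lambda>_. s" s] s
  show "((\<lambda>h. q (T s (g h) - T s y)) \<longlongrightarrow> 0) (at_right 0)" by (simp add: T_diff)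
qed

lemma tendsto_orbit_within:
  assumes q: "q \<in> \<Gamma>\<tau>" and s0: "s0 \<ge> 0" and S: "S \<subseteq> {0..}"
  shows "((\<lambda>s. q (T s z - T s0 z)) \<longlongrightarrow> 0) (at s0 within S)"
proof (rule tendstoI)
  fix e :: real assume "e > 0"
  then obtain d where d: "d > 0" "\<And>s. s \<ge> 0 \<Longrightarrow> \<bar>s - s0\<bar> < d \<Longrightarrow> q (T s z - T s0 z) < e"
    using orbit_continuous[OF q s0] by blast
  then show "\<forall>\<^sub>F s in at s0 within S. dist (q (T s z - T s0 z)) 0 < e"
    unfolding eventually_at using S seminorm_nonneg[OF seminorm_\<Gamma>\<tau>[OF q]]
    by (intro exI[of _ d]) (auto simp: dist_real_def)
qed

lemma tendsto_orbit_left: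
  assumes q: "q \<in> \<Gamma>\<tau>" and s: "s > 0"
  shows "((\<lambda>h. q (T (s - h) y - T s y)) \<longlongrightarrow> 0) (at_right 0)"
proof (rule tendstoI)
  fix e :: real assume "e > 0"
  then obtain d where d: "d > 0" "\<And>r. r \<ge> 0 \<Longrightarrow> \<bar>r - s\<bar> < d \<Longrightarrow> q (T r y - T s y) < e"
    using orbit_continuous[OF q] s by (metis less_imp_le)
  have "0 < min d s" using d s by simp
  from eventually_at_right_real[OF this]
  show "\<forall>\<^sub>F h in at_right 0. dist (q (T (s - h) y - T s y)) 0 < e"
    by eventually_elim (use d(2) seminorm_nonneg[OF seminorm_\<Gamma>\<tau>[OF q]] in auto)
qed

lemma limitin_T_backward:
  fixes g :: "real \<Rightarrow> 'a"
  assumes L: "limitin \<tau> g y (at_right 0)" and b: "\<And>h. h \<in> {0<..1} \<Longrightarrow> norm (g h) \<le> b"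
    and s: "s > 0"
  shows "limitin \<tau> (\<lambda>h. T (s - h) (g h)) (T s y) (at_right 0)"
  unfolding limitin_\<tau>_iff
proof
  fix q assume q: "q \<in> \<Gamma>\<tau>"
  have "\<forall>\<^sub>F h in at_right 0. s - h \<in> {0..s}"
    using eventually_at_right_real[OF s] by eventually_elim auto
  from tendsto_add_zero[OF tendsto_T_moving_time[OF L b q this] tendsto_orbit_left[OF q s]]
  have lim: "((\<lambda>h. q (T (s - h) (g h - y)) + q (T (s - h) y - T s y)) \<longlongrightarrow> 0) (at_right 0)" .
  have upper: "\<forall>\<^sub>F h in at_right 0.
      q (T (s - h) (g h) - T s y) \<le> q (T (s - h) (g h - y)) + q (T (s - h) y - T s y)"
    using eventually_at_right_real[OF s]
  proof eventually_elim
    case (elim h)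
    then have eq: "T (s - h) (g h) - T s y = T (s - h) (g h - y) + (T (s - h) y - T s y)"
      using T_diff[of "s - h"] by simp
    show ?case unfolding eq by (rule seminorm_triangle[OF seminorm_\<Gamma>\<tau>[OF q]])
  qed
  show "((\<lambda>h. q (T (s - h) (g h) - T s y)) \<longlongrightarrow> 0) (at_right 0)"
    by (rule tendsto_sandwich[OF always_eventually upper tendsto_const lim])
      (simp add: seminorm_nonneg[OF seminorm_\<Gamma>\<tau>[OF q]])
qed

lemma domain_iff:
  "x \<in> D \<longleftrightarrow> (\<exists>y. limitin \<tau> (\<lambda>t. (1 / t) *\<^sub>R (T t x - x)) y (at_right 0)) \<and>
     bdd_above ((\<lambda>t. norm (T t x - x) / t) ` {0<..1})"
  using generator by (simp add: bi_generator_def)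

lemma limitin_generator:
  "x \<in> D \<Longrightarrow> limitin \<tau> (\<lambda>t. (1 / t) *\<^sub>R (T t x - x)) (A x) (at_right 0)"
  using generator by (simp add: bi_generator_def)

lemma difference_quotient_bound:
  assumes "x \<in> D"
  obtains b where "\<And>h. h \<in> {0<..1} \<Longrightarrow> norm ((1 / h) *\<^sub>R (T h x - x)) \<le> b"
proof -
  obtain b where "\<forall>h\<in>{0<..1}. norm (T h x - x) / h \<le> b"
    using assms unfolding domain_iff bdd_above_def by auto
  then show thesis by (intro that[of b]) auto
qed

lemma domain_invariant:
  assumes z: "z \<in> D" and s: "s \<ge> 0"
  shows "T s z \<in> D" and "A (T s z) = T s (A z)"
proof -
  have quotient_eq: "(1 / h) *\<^sub>R (T h (T s z) - T s z) = T s ((1 / h) *\<^sub>R (T h z - z))"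
    if "h > 0" for h
    using T_add_time[of h s z] T_add_time[of s h z] that s T_scaleR[OF s] T_diff[OF s]
    by (simp add: add.commute)
  obtain b where b: "\<And>h. h \<in> {0<..1} \<Longrightarrow> norm ((1 / h) *\<^sub>R (T h z - z)) \<le> b"
    using difference_quotient_bound[OF z] by blast
  obtain K where K: "K \<ge> 0" "\<And>w. norm (T s w) \<le> K * norm w"
    using T_norm_bound[of s] s by (metis order_refl)
  have L: "limitin \<tau> (\<lambda>h. (1 / h) *\<^sub>R (T h (T s z) - T s z)) (T s (A z)) (at_right 0)"
  proof (rule limitin_transform_eventually[OF _ limitin_T_at_right[OF limitin_generator[OF z] b s]])
    show "\<forall>\<^sub>F h in at_right 0. T s ((1 / h) *\<^sub>R (T h z - z)) = (1 / h) *\<^sub>R (T h (T s z) - T s z)"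
      using eventually_at_right_less[of 0] by eventually_elim (simp add: quotient_eq)
  qed
  have "norm (T h (T s z) - T s z) / h \<le> K * b" if "h \<in> {0<..1}" for h
  proof -
    have "norm (T h (T s z) - T s z) / h = norm ((1 / h) *\<^sub>R (T h (T s z) - T s z))"
      using that by simp
    also have "\<dots> = norm (T s ((1 / h) *\<^sub>R (T h z - z)))"
      using quotient_eq[of h] that by simp
    also have "\<dots> \<le> K * norm ((1 / h) *\<^sub>R (T h z - z))" by (rule K(2))
    also have "\<dots> \<le> K * b" using b[OF that] K(1) by (rule mult_left_mono)
    finally show ?thesis .
  qed
  then have "bdd_above ((\<lambda>h. norm (T h (T s z) - T s z) / h) ` {0<..1})" by (rule bdd_aboveI2)
  with L show "T s z \<in> D" unfolding domain_iff by blast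
  then show "A (T s z) = T s (A z)"
    using limitin_\<tau>_unique[OF limitin_generator L] by simp
qed

subsection \<open>Equicontinuity implies dissipativity\<close>

lemma contractive_difference_quotient_le:
  assumes P: "seminorm P" and contr: "P (T h x) \<le> P x" and h: "h > 0" and l: "l \<ge> 0"
  shows "l * P x \<le> P (l *\<^sub>R x - (1 / h) *\<^sub>R (T h x - x))"
proof -
  have "l * P x = (1 / h) * ((1 + l * h) * P x - P x)" using h by (simp add: field_simps)
  also have "\<dots> \<le> (1 / h) * ((1 + l * h) * P x - P (T h x))"
    using contr h by (intro mult_left_mono) auto
  also have "\<dots> = (1 / h) * (P ((1 + l * h) *\<^sub>R x) - P (T h x))"
    using seminorm_scaleR[OF P] l h by simp
  also have "\<dots> \<le> (1 / h) * P ((1 + l * h) *\<^sub>R x - T h x)"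
    using seminorm_reverse_triangle[OF P, of "(1 + l * h) *\<^sub>R x" "T h x"] h
    by (intro mult_left_mono) auto
  also have "\<dots> = P ((1 / h) *\<^sub>R ((1 + l * h) *\<^sub>R x - T h x))"
    using seminorm_scaleR[OF P, of "1 / h"] h by simp
  also have "\<dots> = P (l *\<^sub>R x - (1 / h) *\<^sub>R (T h x - x))"
    using h by (simp add: algebra_simps)
  finally show ?thesis .
qed

text \<open>The difference quotients converge to \<open>A x\<close> in \<open>\<gamma>\<close>, since they are norm bounded and
  converge in \<open>\<tau>\<close>; so the estimate above passes to the limit for \<open>\<gamma>\<close>-continuous \<open>P\<close>.\<close>

lemma dissipative_if_contractive:
  assumes gen: "generates \<Gamma> \<gamma>" and sn: "\<forall>p\<in>\<Gamma>. seminorm p"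
    and P: "seminorm P" and q: "q \<in> \<Gamma>" and dom: "\<And>y. P y \<le> C * q y"
    and contr: "\<And>h y. h \<ge> 0 \<Longrightarrow> P (T h y) \<le> P y"
    and l: "l > 0" and x: "x \<in> D"
  shows "l * P x \<le> P (l *\<^sub>R x - A x)"
proof -
  define f where "f h = (1 / h) *\<^sub>R (T h x - x)" for h
  obtain b where b: "\<And>h. h \<in> {0<..1} \<Longrightarrow> norm (f h) \<le> b"
    using difference_quotient_bound[OF x] unfolding f_def by blast
  have ev01: "\<forall>\<^sub>F h in at_right 0. h \<in> {0<..<1::real}"
    by (rule eventually_at_right_real) simp
  have "\<forall>\<^sub>F h in at_right 0. f h \<in> insert (A x) (cball 0 b)"
    using ev01 by eventually_elim (use b in auto)
  then have "((\<lambda>h. q (f h - A x)) \<longlongrightarrow> 0) (at_right 0)"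
    using limitin_generator[OF x] unfolding f_def[symmetric]
    by (intro tendsto_seminorm_if_limitin_\<tau>[OF gen sn q, of "insert (A x) (cball 0 b)"]) auto
  then have "((\<lambda>h. P (l *\<^sub>R x - A x) + C * q (f h - A x)) \<longlongrightarrow> P (l *\<^sub>R x - A x) + C * 0) (at_right 0)"
    by (intro tendsto_intros)
  then have lim: "((\<lambda>h. P (l *\<^sub>R x - A x) + C * q (f h - A x)) \<longlongrightarrow> P (l *\<^sub>R x - A x)) (at_right 0)"
    by simp
  have "l * P x \<le> P (l *\<^sub>R x - A x) + C * q (f h - A x)" if h: "h \<in> {0<..<1}" for h
  proof -
    have "l * P x \<le> P (l *\<^sub>R x - f h)"
      unfolding f_def using contractive_difference_quotient_le[OF P contr] h l by simp
    also have "\<dots> \<le> P (l *\<^sub>R x - A x) + P (f h - A x)"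
      using seminorm_diff_triangle[OF P, of "l *\<^sub>R x" "f h" "A x"]
        seminorm_minus_commute[OF P, of "A x"] by simp
    also have "\<dots> \<le> P (l *\<^sub>R x - A x) + C * q (f h - A x)" using dom by simp
    finally show ?thesis .
  qed
  then show ?thesis
    by (intro tendsto_lowerbound[OF lim]) (use ev01 in \<open>auto elim: eventually_mono\<close>)
qed

definition orbit_sup :: "('a \<Rightarrow> real) \<Rightarrow> 'a \<Rightarrow> real" where
  "orbit_sup p x = (SUP t\<in>{0..}. p (T t x))"

lemma orbit_sup_least: "(\<And>t. t \<ge> 0 \<Longrightarrow> p (T t x) \<le> b) \<Longrightarrow> orbit_sup p x \<le> b"
  unfolding orbit_sup_def by (rule cSUP_least) auto

lemma orbit_sup_dominated:
  assumes "\<And>t x. t \<ge> 0 \<Longrightarrow> p (T t x) \<le> C * q x"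
  shows "bdd_above ((\<lambda>t. p (T t x)) ` {0..})" and "orbit_sup p x \<le> C * q x"
  using assms by (auto intro: bdd_aboveI2[where M = "C * q x"] orbit_sup_least)

context
  fixes p :: "'a \<Rightarrow> real"
  assumes bounded_orbits: "\<And>x. bdd_above ((\<lambda>t. p (T t x)) ` {0..})"
begin

lemma orbit_sup_upper: "t \<ge> 0 \<Longrightarrow> p (T t x) \<le> orbit_sup p x"
  unfolding orbit_sup_def by (rule cSUP_upper[OF _ bounded_orbits]) simp

lemma le_orbit_sup: "p x \<le> orbit_sup p x"
  using orbit_sup_upper[of 0] by simp

lemma orbit_sup_T_le: "h \<ge> 0 \<Longrightarrow> orbit_sup p (T h x) \<le> orbit_sup p x"
  by (rule orbit_sup_least) (simp add: T_add_time[symmetric] orbit_sup_upper)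

lemma seminorm_orbit_sup:
  assumes p: "seminorm p"
  shows "seminorm (orbit_sup p)"
proof -
  have add: "orbit_sup p (x + y) \<le> orbit_sup p x + orbit_sup p y" for x y
  proof (rule orbit_sup_least)
    fix t :: real assume t: "t \<ge> 0"
    have "p (T t (x + y)) \<le> p (T t x) + p (T t y)"
      using T_add[OF t] seminorm_triangle[OF p] by simp
    also have "\<dots> \<le> orbit_sup p x + orbit_sup p y" by (intro add_mono orbit_sup_upper t)
    finally show "p (T t (x + y)) \<le> orbit_sup p x + orbit_sup p y" .
  qed
  have scale: "orbit_sup p (c *\<^sub>R x) \<le> \<bar>c\<bar> * orbit_sup p x" for c x
  proof (rule orbit_sup_least)
    fix t :: real assume t: "t \<ge> 0"
    show "p (T t (c *\<^sub>R x)) \<le> \<bar>c\<bar> * orbit_sup p x"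
      using T_scaleR[OF t] seminorm_scaleR[OF p] orbit_sup_upper[OF t, of x]
      by (simp add: mult_left_mono)
  qed
  have "orbit_sup p (c *\<^sub>R x) = \<bar>c\<bar> * orbit_sup p x" for c x
  proof (cases "c = 0")
    case True
    then show ?thesis
      using scale[of c x] le_orbit_sup[of 0] seminorm_zero[OF p] by simp
  next
    case False
    have "orbit_sup p x = orbit_sup p (inverse c *\<^sub>R (c *\<^sub>R x))" using False by simp
    also have "\<dots> \<le> \<bar>inverse c\<bar> * orbit_sup p (c *\<^sub>R x)" by (rule scale)
    finally have "\<bar>c\<bar> * orbit_sup p x \<le> orbit_sup p (c *\<^sub>R x)"
      using False by (simp add: field_simps abs_inverse)
    then show ?thesis using scale[of c x] by simp
  qed
  with add show ?thesis unfolding seminorm_def by blast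
qed

end

lemma directed_orbit_sups:
  assumes dir: "directed_seminorms \<Gamma>"
    and bdd: "\<And>p x. p \<in> \<Gamma> \<Longrightarrow> bdd_above ((\<lambda>t. p (T t x)) ` {0..})"
  shows "directed_seminorms (orbit_sup ` \<Gamma>)"
  unfolding directed_seminorms_def
proof (intro conjI ballI)
  show "orbit_sup ` \<Gamma> \<noteq> {}" using dir by (simp add: directed_seminorms_def)
  show "seminorm p'" if p': "p' \<in> orbit_sup ` \<Gamma>" for p'
  proof -
    obtain p where p: "p \<in> \<Gamma>" "p' = orbit_sup p" using p' by blast
    then show ?thesis
      using seminorm_orbit_sup[OF bdd[OF p(1)]] dir by (simp add: directed_seminorms_def)
  qed
  fix p' q' assume "p' \<in> orbit_sup ` \<Gamma>" "q' \<in> orbit_sup ` \<Gamma>"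
  then obtain p q where pq: "p \<in> \<Gamma>" "q \<in> \<Gamma>" "p' = orbit_sup p" "q' = orbit_sup q" by blast
  moreover have "\<forall>p\<in>\<Gamma>. \<forall>q\<in>\<Gamma>. \<exists>r\<in>\<Gamma>. \<forall>x. p x \<le> r x \<and> q x \<le> r x"
    using dir by (simp add: directed_seminorms_def)
  ultimately obtain r where r: "r \<in> \<Gamma>" "\<forall>x. p x \<le> r x \<and> q x \<le> r x" by blast
  have "orbit_sup s x \<le> orbit_sup r x" if "\<forall>x. s x \<le> r x" for s x
  proof (rule orbit_sup_least)
    fix t :: real assume "t \<ge> 0"
    then show "s (T t x) \<le> orbit_sup r x"
      using order.trans[OF spec[OF that] orbit_sup_upper[OF bdd[OF r(1)]]] by simp
  qed
  then have "\<forall>x. p' x \<le> orbit_sup r x \<and> q' x \<le> orbit_sup r x" using r pq by simp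
  then show "\<exists>r'\<in>orbit_sup ` \<Gamma>. \<forall>x. p' x \<le> r' x \<and> q' x \<le> r' x" using r(1) by blast
qed

lemma equicontinuous_imp_dissipative:
  assumes "equicontinuous_semigroup \<gamma> T"
  shows "\<exists>\<Gamma>. directed_seminorms \<Gamma> \<and> generates \<Gamma> \<gamma> \<and> dissipative_wrt \<Gamma> D A"
proof -
  obtain \<Gamma> where dir: "directed_seminorms \<Gamma>" and gen: "generates \<Gamma> \<gamma>"
    and equi: "\<forall>p\<in>\<Gamma>. \<exists>q\<in>\<Gamma>. \<exists>C\<ge>0. \<forall>t\<ge>0. \<forall>x. p (T t x) \<le> C * q x"
    using assms unfolding equicontinuous_semigroup_def by blast
  have sn: "\<forall>p\<in>\<Gamma>. seminorm p" using dir by (simp add: directed_seminorms_def)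
  have dom: "\<exists>q\<in>\<Gamma>. \<exists>C>0. \<forall>t\<ge>0. \<forall>x. p (T t x) \<le> C * q x" if "p \<in> \<Gamma>" for p
  proof -
    from equi that obtain q C where q: "q \<in> \<Gamma>" and C: "C \<ge> 0"
      and le: "\<forall>t\<ge>0. \<forall>x. p (T t x) \<le> C * q x" by blast
    have "C * q x \<le> (C + 1) * q x" for x
      using seminorm_nonneg[of q x] sn q by (simp add: distrib_right)
    with le have "\<forall>t\<ge>0. \<forall>x. p (T t x) \<le> (C + 1) * q x" by (meson order.trans)
    then show ?thesis using q C add_nonneg_pos[OF C zero_less_one] by blast
  qed
  then have bdd: "bdd_above ((\<lambda>t. p (T t x)) ` {0..})"
    and dom': "\<exists>q\<in>\<Gamma>. \<exists>C>0. \<forall>x. orbit_sup p x \<le> C * q x" if "p \<in> \<Gamma>" for p x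
    using that orbit_sup_dominated by (meson atLeast_iff)+
  define \<Gamma>' where "\<Gamma>' = orbit_sup ` \<Gamma>"
  have "generates \<Gamma>' \<gamma>"
  proof (rule generates_if_equivalent[OF gen])
    show "\<forall>p\<in>\<Gamma>'. \<exists>q\<in>\<Gamma>. \<exists>C>0. \<forall>x. p x \<le> C * q x" using dom' unfolding \<Gamma>'_def by blast
    have "p x \<le> 1 * orbit_sup p x" if "p \<in> \<Gamma>" for p x using le_orbit_sup[OF bdd[OF that]] by simp
    then show "\<forall>p\<in>\<Gamma>. \<exists>q\<in>\<Gamma>'. \<exists>C>0. \<forall>x. p x \<le> C * q x"
      unfolding \<Gamma>'_def using zero_less_one by blast
  qed
  moreover have "dissipative_wrt \<Gamma>' D A"
    unfolding dissipative_wrt_def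
  proof (intro allI impI ballI)
    fix l :: real and x p' assume "l > 0" "x \<in> D" "p' \<in> \<Gamma>'"
    then obtain p where p: "p \<in> \<Gamma>" "p' = orbit_sup p" unfolding \<Gamma>'_def by blast
    obtain q C where qC: "q \<in> \<Gamma>" "\<forall>y. orbit_sup p y \<le> C * q y" using dom'[OF p(1)] by blast
    have "seminorm (orbit_sup p)" using seminorm_orbit_sup[OF bdd[OF p(1)]] sn p(1) by simp
    from dissipative_if_contractive[OF gen sn this qC(1) _ orbit_sup_T_le[OF bdd[OF p(1)]]
        \<open>l > 0\<close> \<open>x \<in> D\<close>]
    show "l * p' x \<le> p' (l *\<^sub>R x - A x)" using qC(2) p(2) by blast
  qed
  ultimately show ?thesis using directed_orbit_sups[OF dir bdd] unfolding \<Gamma>'_def by blast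
qed

subsection \<open>Orbit integrals as limits of Riemann sums\<close>

text \<open>Orbits are only \<open>\<tau>\<close>-continuous, so \<open>\<integral>\<^sub>0\<^sup>h T s x ds\<close> is not a Bochner integral; it is
  obtained as the \<open>\<tau>\<close>-limit of left Riemann sums over \<open>N\<close> equal steps.\<close>

definition riemann_sum :: "'a \<Rightarrow> real \<Rightarrow> nat \<Rightarrow> 'a" where
  "riemann_sum x h N = (h / real N) *\<^sub>R (\<Sum>k<N. T (real k * h / real N) x)"

definition orbit_integral :: "'a \<Rightarrow> real \<Rightarrow> 'a" where
  "orbit_integral x h = (SOME z. limitin \<tau> (\<lambda>n. riemann_sum x h (Suc n)) z sequentially)"

lemma riemann_sum_deviation_le:
  assumes p: "seminorm p" and h: "h \<ge> 0" and N: "N > 0"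
    and dev: "\<And>s. s \<in> {0..h} \<Longrightarrow> p (T s x - w) \<le> \<beta>"
  shows "p (riemann_sum x h N - h *\<^sub>R w) \<le> h * \<beta>"
proof -
  have "riemann_sum x h N - h *\<^sub>R w = (h / real N) *\<^sub>R (\<Sum>k<N. T (real k * h / real N) x - w)"
    unfolding riemann_sum_def using N
    by (simp add: sum_subtractf scaleR_diff_right sum_constant_scaleR)
  then have "p (riemann_sum x h N - h *\<^sub>R w) = h / real N * p (\<Sum>k<N. T (real k * h / real N) x - w)"
    using seminorm_scaleR[OF p] h by simp
  also have "\<dots> \<le> h / real N * (\<Sum>k<N. p (T (real k * h / real N) x - w))"
    using seminorm_sum_le[OF p] h by (intro mult_left_mono) auto
  also have "\<dots> \<le> h / real N * (\<Sum>k<N. \<beta>)"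
    using node_in_interval[OF h _ N] dev h by (intro mult_left_mono sum_mono) auto
  also have "\<dots> = h * \<beta>" using N by simp
  finally show ?thesis .
qed

lemma bounded_riemann_sums:
  assumes "h \<ge> 0"
  shows "bounded (range (\<lambda>n. riemann_sum x h (Suc n)))"
proof -
  obtain K where K: "K \<ge> 0" "\<And>t w. 0 \<le> t \<Longrightarrow> t \<le> h \<Longrightarrow> norm (T t w) \<le> K * norm w"
    using T_norm_bound by blast
  have "norm (riemann_sum x h (Suc n)) \<le> h * (K * norm x)" for n
    using riemann_sum_deviation_le[OF seminorm_norm assms, of "Suc n" x 0] K by simp
  then show ?thesis unfolding bounded_iff by blast
qed

lemma riemann_sum_refine:
  assumes h: "h > 0" and q: "q \<in> \<Gamma>\<tau>" and N1: "N1 > 0" and N2: "N2 > 0"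
    and osc: "\<forall>s\<in>{0..h}. \<forall>s'\<in>{0..h}. \<bar>s - s'\<bar> < h / real N1 \<longrightarrow> q (T s x - T s' x) < e"
  shows "q (riemann_sum x h N1 - riemann_sum x h (N1 * N2)) \<le> h * e"
proof -
  define c where "c = h / (real N1 * real N2)"
  define f where "f k j = T (real k * h / real N1) x - T (real (k * N2 + j) * h / real (N1 * N2)) x"
    for k j
  have "(\<Sum>k<N1. \<Sum>j<N2. T (real k * h / real N1) x) =
      real N2 *\<^sub>R (\<Sum>k<N1. T (real k * h / real N1) x)"
    by (simp add: sum_constant_scaleR scaleR_sum_right)
  moreover have "c * real N2 = h / real N1" unfolding c_def using N2 by simp
  ultimately have "riemann_sum x h N1 = c *\<^sub>R (\<Sum>k<N1. \<Sum>j<N2. T (real k * h / real N1) x)"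
    unfolding riemann_sum_def by simp
  moreover have "riemann_sum x h (N1 * N2) =
      c *\<^sub>R (\<Sum>k<N1. \<Sum>j<N2. T (real (k * N2 + j) * h / real (N1 * N2)) x)"
    unfolding riemann_sum_def c_def sum_lessThan_mult by simp
  ultimately have "riemann_sum x h N1 - riemann_sum x h (N1 * N2) = c *\<^sub>R (\<Sum>k<N1. \<Sum>j<N2. f k j)"
    unfolding f_def by (simp add: sum_subtractf scaleR_diff_right)
  then have "q (riemann_sum x h N1 - riemann_sum x h (N1 * N2)) = c * q (\<Sum>k<N1. \<Sum>j<N2. f k j)"
    using seminorm_scaleR[OF seminorm_\<Gamma>\<tau>[OF q]] h unfolding c_def by simp
  also have "\<dots> \<le> c * (\<Sum>k<N1. \<Sum>j<N2. q (f k j))"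
  proof (rule mult_left_mono)
    have "q (\<Sum>k<N1. \<Sum>j<N2. f k j) \<le> (\<Sum>k<N1. q (\<Sum>j<N2. f k j))"
      by (rule seminorm_sum_le[OF seminorm_\<Gamma>\<tau>[OF q]])
    also have "\<dots> \<le> (\<Sum>k<N1. \<Sum>j<N2. q (f k j))"
      by (intro sum_mono seminorm_sum_le[OF seminorm_\<Gamma>\<tau>[OF q]])
    finally show "q (\<Sum>k<N1. \<Sum>j<N2. f k j) \<le> (\<Sum>k<N1. \<Sum>j<N2. q (f k j))" .
  qed (use h in \<open>simp add: c_def\<close>)
  also have "\<dots> \<le> c * (\<Sum>k<N1. \<Sum>j<N2. e)"
  proof (intro mult_left_mono sum_mono)
    fix k j assume "k \<in> {..<N1}" "j \<in> {..<N2}"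
    then have "real k * h / real N1 \<in> {0..h}"
      "real (k * N2 + j) * h / real (N1 * N2) \<in> {0..h}"
      "\<bar>real k * h / real N1 - real (k * N2 + j) * h / real (N1 * N2)\<bar> < h / real N1"
      using node_in_interval[of h k N1] refined_node[OF h, of k N1 j N2] h N1 by auto
    then show "q (f k j) \<le> e" unfolding f_def using osc by (meson less_imp_le)
  qed (use h in \<open>simp add: c_def\<close>)
  also have "\<dots> = h * e" unfolding c_def using N1 N2 by simp
  finally show ?thesis .
qed

lemma riemann_sum_Cauchy:
  assumes h: "h > 0" and q: "q \<in> \<Gamma>\<tau>" and e: "e > 0"
  shows "\<exists>M. \<forall>m\<ge>M. \<forall>n\<ge>M. q (riemann_sum x h (Suc m) - riemann_sum x h (Suc n)) < e"
proof -
  define e' where "e' = e / (2 * h + 1)"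
  have e': "e' > 0" "2 * (h * e') < e" unfolding e'_def using e h by (simp_all add: field_simps)
  obtain d where d: "d > 0" "\<forall>s\<in>{0..h}. \<forall>s'\<in>{0..h}. \<bar>s - s'\<bar> < d \<longrightarrow> q (T s x - T s' x) < e'"
    using orbit_uniformly_continuous[OF q _ e'(1), of h x] h by auto
  obtain M :: nat where M: "h / d < real M" using reals_Archimedean2 by blast
  have close: "q (riemann_sum x h (Suc m) - riemann_sum x h (Suc m * Suc n)) \<le> h * e'"
    if "m \<ge> M" for m n
  proof (rule riemann_sum_refine[OF h q])
    have "h / d < real (Suc m)" using M that by linarith
    then have "h / real (Suc m) < d" using d(1) h by (simp add: field_simps)
    then show "\<forall>s\<in>{0..h}. \<forall>s'\<in>{0..h}. \<bar>s - s'\<bar> < h / real (Suc m) \<longrightarrow> q (T s x - T s' x) < e'"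
      using d(2) by auto
  qed auto
  show ?thesis
  proof (intro exI allI impI)
    fix m n assume "M \<le> m" "M \<le> n"
    then have "q (riemann_sum x h (Suc m) - riemann_sum x h (Suc n)) \<le> h * e' + h * e'"
      using close[of m n] close[of n m] seminorm_minus_commute[OF seminorm_\<Gamma>\<tau>[OF q]]
        seminorm_diff_triangle[OF seminorm_\<Gamma>\<tau>[OF q], of "riemann_sum x h (Suc m)"
          "riemann_sum x h (Suc n)" "riemann_sum x h (Suc m * Suc n)"]
      by (simp add: mult.commute)
    then show "q (riemann_sum x h (Suc m) - riemann_sum x h (Suc n)) < e" using e' by linarith
  qed
qed

lemma limitin_orbit_integral:
  assumes "h > 0"
  shows "limitin \<tau> (\<lambda>n. riemann_sum x h (Suc n)) (orbit_integral x h) sequentially"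
proof -
  have "\<exists>z. limitin \<tau> (\<lambda>n. riemann_sum x h (Suc n)) z sequentially"
    using bounded_Cauchy_limitin_\<tau>[OF bounded_riemann_sums] riemann_sum_Cauchy assms by simp
  then show ?thesis unfolding orbit_integral_def by (rule someI_ex)
qed

lemma orbit_integral_deviation_le:
  assumes h: "h > 0" and q: "q \<in> \<Gamma>\<tau>" and dev: "\<And>s. s \<in> {0..h} \<Longrightarrow> q (T s x - w) \<le> \<beta>"
  shows "q (orbit_integral x h - h *\<^sub>R w) \<le> h * \<beta>"
proof (rule tendsto_upperbound)
  have "((\<lambda>n. q (riemann_sum x h (Suc n) - orbit_integral x h)) \<longlongrightarrow> 0) sequentially"
    using limitin_orbit_integral[OF h, of x] q unfolding limitin_\<tau>_iff by blast
  then show "((\<lambda>n. q (riemann_sum x h (Suc n) - h *\<^sub>R w)) \<longlongrightarrow>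
      q (orbit_integral x h - h *\<^sub>R w)) sequentially"
    by (rule seminorm_tendsto_shift[OF seminorm_\<Gamma>\<tau>[OF q]])
  show "\<forall>\<^sub>F n in sequentially. q (riemann_sum x h (Suc n) - h *\<^sub>R w) \<le> h * \<beta>"
    using riemann_sum_deviation_le[OF seminorm_\<Gamma>\<tau>[OF q] _ _ dev] h by simp
qed simp

lemma orbit_integral_norm_le:
  assumes h: "h > 0" and K: "\<And>t w. 0 \<le> t \<Longrightarrow> t \<le> h \<Longrightarrow> norm (T t w) \<le> K * norm w"
  shows "norm (orbit_integral x h) \<le> h * (K * norm x)"
proof (rule norm_le_if_seminorms_le)
  fix q assume q: "q \<in> \<Gamma>\<tau>"
  have "q (T s x - 0) \<le> K * norm x" if "s \<in> {0..h}" for s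
    using order.trans[OF seminorm_le_norm[OF q] K[of s x]] that by simp
  from orbit_integral_deviation_le[OF h q this] show "q (orbit_integral x h) \<le> h * (K * norm x)"
    by simp
qed

subsection \<open>Orbit integrals lie in the domain of the generator\<close>

text \<open>\<open>shift_index h r N\<close> counts the whole Riemann steps \<open>h / N\<close> that fit into \<open>r\<close>; shifting a
  Riemann sum by \<open>T r\<close> moves it by this many nodes, up to an error \<open>shift_error\<close>, and leaves
  the \<open>boundary_sum\<close> of the nodes that slide past \<open>h\<close>.\<close>

definition shift_index :: "real \<Rightarrow> real \<Rightarrow> nat \<Rightarrow> nat" where
  "shift_index h r N = nat \<lfloor>r / (h / real N)\<rfloor>"

definition shift_error :: "'a \<Rightarrow> real \<Rightarrow> real \<Rightarrow> nat \<Rightarrow> 'a" where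
  "shift_error x h r N = (h / real N) *\<^sub>R
     (\<Sum>k<N. T (r + real k * h / real N) x - T (real (k + shift_index h r N) * h / real N) x)"

definition boundary_sum :: "'a \<Rightarrow> real \<Rightarrow> real \<Rightarrow> nat \<Rightarrow> 'a" where
  "boundary_sum x h r N = (h / real N) *\<^sub>R
     (\<Sum>i<shift_index h r N. T (h + real i * h / real N) x - T (real i * h / real N) x)"

lemma shift_index_bounds:
  assumes "h > 0" and "r \<ge> 0" and "N > 0"
  shows "real (shift_index h r N) * (h / real N) \<le> r"
    and "r < real (shift_index h r N) * (h / real N) + h / real N"
proof -
  define d where "d = h / real N"
  have d: "d > 0" unfolding d_def using assms by simp
  have "r / d \<ge> 0" using assms d by simp
  then have j: "real (shift_index h r N) = of_int \<lfloor>r / d\<rfloor>"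
    unfolding shift_index_def d_def[symmetric] by simp
  have "of_int \<lfloor>r / d\<rfloor> * d \<le> r / d * d"
    by (rule mult_right_mono[OF of_int_floor_le]) (use d in simp)
  then have "real (shift_index h r N) * d \<le> r" using j d by simp
  then show "real (shift_index h r N) * (h / real N) \<le> r" unfolding d_def .
  have "r / d * d < (of_int \<lfloor>r / d\<rfloor> + 1) * d"
    by (rule mult_strict_right_mono[OF real_of_int_floor_add_one_gt d])
  then have "r < (real (shift_index h r N) + 1) * d" using j d by simp
  then show "r < real (shift_index h r N) * (h / real N) + h / real N"
    unfolding d_def by (simp add: algebra_simps)
qed

lemma T_riemann_sum_diff:
  assumes h: "h > 0" and r: "r \<ge> 0" and N: "N > 0"
  shows "T r (riemann_sum x h N) - riemann_sum x h N = shift_error x h r N + boundary_sum x h r N"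
proof -
  define f where "f k = T (real k * h / real N) x" for k
  define j where "j = shift_index h r N"
  have Tr: "T r (riemann_sum x h N) = (h / real N) *\<^sub>R (\<Sum>k<N. T (r + real k * h / real N) x)"
    unfolding riemann_sum_def using h by (simp add: T_scaleR[OF r] T_sum[OF r] T_add_time[OF r])
  have fN: "f (N + i) = T (h + real i * h / real N) x" for i
  proof -
    have "real (N + i) * h / real N = h + real i * h / real N" using N by (simp add: field_simps)
    then show ?thesis unfolding f_def by simp
  qed
  have "(\<Sum>k<N. T (r + real k * h / real N) x) - (\<Sum>k<N. f k) =
        (\<Sum>k<N. T (r + real k * h / real N) x - f (k + j)) + (\<Sum>k<N. f (k + j) - f k)"
    by (simp add: sum_subtractf)
  also have "(\<Sum>k<N. f (k + j) - f k) = (\<Sum>i<j. f (N + i) - f i)" by (rule sum_shift_telescope)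
  finally show ?thesis
    unfolding Tr shift_error_def boundary_sum_def j_def[symmetric] fN
    unfolding riemann_sum_def f_def
    by (simp add: scaleR_diff_right[symmetric] scaleR_add_right[symmetric])
qed

lemma shift_error_le:
  assumes h: "h > 0" and r: "r > 0" and N: "N > 0" and q: "seminorm q"
    and osc: "\<forall>s\<in>{0..h + r}. \<forall>s'\<in>{0..h + r}. \<bar>s - s'\<bar> < h / real N \<longrightarrow> q (T s x - T s' x) < \<eta>"
  shows "q (shift_error x h r N) \<le> h * \<eta>"
proof -
  define j where "j = shift_index h r N"
  have j: "real j * (h / real N) \<le> r" "r < real j * (h / real N) + h / real N"
    using shift_index_bounds[OF h _ N, of r] r unfolding j_def by auto
  have "q (T (r + real k * h / real N) x - T (real (k + j) * h / real N) x) \<le> \<eta>" if k: "k < N" for k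
  proof -
    have kh: "real k * h / real N \<in> {0..h}" using k h N by (intro node_in_interval) auto
    have eq: "real (k + j) * h / real N = real k * h / real N + real j * (h / real N)"
      by (simp add: distrib_right add_divide_distrib)
    have "0 \<le> real j * (h / real N)" using h N by simp
    then have "r + real k * h / real N \<in> {0..h + r}" "real (k + j) * h / real N \<in> {0..h + r}"
      "\<bar>(r + real k * h / real N) - real (k + j) * h / real N\<bar> < h / real N"
      using kh j r unfolding eq by auto
    then show ?thesis using osc by (meson less_imp_le)
  qed
  then have sum_le:
      "(\<Sum>k<N. q (T (r + real k * h / real N) x - T (real (k + j) * h / real N) x)) \<le> (\<Sum>k<N. \<eta>)"
    by (intro sum_mono) simp
  have "q (shift_error x h r N) =
      h / real N * q (\<Sum>k<N. T (r + real k * h / real N) x - T (real (k + j) * h / real N) x)"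
    unfolding shift_error_def j_def[symmetric] using seminorm_scaleR[OF q] h by simp
  also have "\<dots> \<le>
      h / real N * (\<Sum>k<N. q (T (r + real k * h / real N) x - T (real (k + j) * h / real N) x))"
    using seminorm_sum_le[OF q] h by (intro mult_left_mono) auto
  also have "\<dots> \<le> h / real N * (\<Sum>k<N. \<eta>)" using sum_le h by (intro mult_left_mono) auto
  also have "\<dots> = h * \<eta>" using N by simp
  finally show ?thesis .
qed

lemma shift_error_vanishes:
  assumes h: "h > 0" and r: "r > 0" and q: "q \<in> \<Gamma>\<tau>" and e: "e > 0"
  shows "\<forall>\<^sub>F n in sequentially. (1 / r) * q (shift_error x h r (Suc n)) \<le> e"
proof -
  have \<eta>: "e * r / h > 0" using e r h by simp
  obtain d where d: "d > 0"
    "\<forall>s\<in>{0..h + r}. \<forall>s'\<in>{0..h + r}. \<bar>s - s'\<bar> < d \<longrightarrow> q (T s x - T s' x) < e * r / h"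
    using orbit_uniformly_continuous[OF q _ \<eta>, of "h + r" x] h r by auto
  obtain M :: nat where M: "h / d < real M" using reals_Archimedean2 by blast
  show ?thesis unfolding eventually_sequentially
  proof (intro exI allI impI)
    fix n assume "M \<le> n"
    then have "h / d < real (Suc n)" using M by linarith
    then have "h / real (Suc n) < d" using d(1) h by (simp add: field_simps)
    then have "q (shift_error x h r (Suc n)) \<le> h * (e * r / h)"
      using d(2) by (intro shift_error_le[OF h r _ seminorm_\<Gamma>\<tau>[OF q]]) auto
    then show "(1 / r) * q (shift_error x h r (Suc n)) \<le> e" using h r by (simp add: field_simps)
  qed
qed

lemma boundary_sum_le:
  assumes h: "h > 0" and r: "r > 0" and N: "N > 0" and q: "seminorm q"
    and dev: "\<And>s. s \<in> {0..r} \<Longrightarrow> q (T (h + s) x - T s x - v) \<le> \<beta>"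
  shows "q ((1 / r) *\<^sub>R boundary_sum x h r N - v) \<le> \<beta> + (h / real N) / r * q v"
proof -
  define j where "j = shift_index h r N"
  define c where "c = h / real N / r"
  have jb: "real j * (h / real N) \<le> r" "r < real j * (h / real N) + h / real N"
    using shift_index_bounds[OF h _ N, of r] r unfolding j_def by auto
  have jc: "real j * c = real j * (h / real N) / r"
    "real j * c + c = (real j * (h / real N) + h / real N) / r"
    unfolding c_def by (simp_all add: add_divide_distrib)
  have c: "c \<ge> 0" "real j * c \<le> 1" "1 \<le> real j * c + c"
  proof -
    show "c \<ge> 0" unfolding c_def using h r by simp
    show "real j * c \<le> 1" unfolding jc(1) divide_le_eq_1_pos[OF r] by (rule jb(1))
    show "1 \<le> real j * c + c" unfolding jc(2) le_divide_eq_1_pos[OF r] using jb(2) by simp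
  qed
  have "0 \<in> {0..r}" using r by simp
  from order.trans[OF seminorm_nonneg[OF q] dev[OF this]] have \<beta>: "\<beta> \<ge> 0" .
  define g where "g i = T (h + real i * (h / real N)) x - T (real i * (h / real N)) x - v" for i
  have g: "q (g i) \<le> \<beta>" if "i < j" for i
    unfolding g_def
  proof (rule dev)
    have "real i * (h / real N) \<le> real j * (h / real N)"
      using that h by (intro mult_right_mono) auto
    then show "real i * (h / real N) \<in> {0..r}" using jb h by auto
  qed
  have "(1 / r) *\<^sub>R boundary_sum x h r N = c *\<^sub>R (\<Sum>i<j. g i + v)"
    unfolding boundary_sum_def j_def[symmetric] c_def g_def by simp
  with seminorm_average_deviation_le[where v = v, OF q \<beta> c g] show ?thesis unfolding c_def by simp
qed

lemma riemann_sum_difference_quotient_le: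
  assumes h: "h > 0" and r: "r > 0" and N: "N > 0" and q: "seminorm q"
    and dev: "\<And>s. s \<in> {0..r} \<Longrightarrow> q (T (h + s) x - T s x - v) \<le> \<beta>"
  shows "q ((1 / r) *\<^sub>R (T r (riemann_sum x h N) - riemann_sum x h N) - v)
    \<le> (1 / r) * q (shift_error x h r N) + (\<beta> + (h / real N) / r * q v)"
proof -
  have "(1 / r) *\<^sub>R (T r (riemann_sum x h N) - riemann_sum x h N) - v
      = (1 / r) *\<^sub>R shift_error x h r N + ((1 / r) *\<^sub>R boundary_sum x h r N - v)"
    using T_riemann_sum_diff[OF h _ N, of r x] r by (simp add: algebra_simps)
  then show ?thesis
    using seminorm_triangle[OF q] seminorm_scaleR[OF q, of "1 / r"] boundary_sum_le[OF h r N q dev]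
      r
    by (smt (verit) abs_of_pos divide_pos_pos zero_less_one)
qed

text \<open>The difference quotients of the orbit integral are averages of those of the orbit:
  \<open>(T r I - I) / r = (1 / r) \<integral>\<^sub>0\<^sup>r (T (h + s) x - T s x) ds\<close> for \<open>I = \<integral>\<^sub>0\<^sup>h T s x ds\<close>.\<close>

lemma orbit_integral_difference_quotient_le:
  assumes h: "h > 0" and r: "r > 0" and q: "q \<in> \<Gamma>\<tau>"
    and dev: "\<And>s. s \<in> {0..r} \<Longrightarrow> q (T (h + s) x - T s x - v) \<le> \<beta>"
  shows "q ((1 / r) *\<^sub>R (T r (orbit_integral x h) - orbit_integral x h) - v) \<le> \<beta>"
proof (rule field_le_epsilon)
  fix e :: real assume e: "e > 0"
  define S where "S n = riemann_sum x h (Suc n)" for n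
  have "limitin \<tau> S (orbit_integral x h) sequentially"
    unfolding S_def by (rule limitin_orbit_integral[OF h])
  moreover from this have "limitin \<tau> (\<lambda>n. T r (S n)) (T r (orbit_integral x h)) sequentially"
    using limitin_T bounded_riemann_sums h r unfolding S_def by simp
  ultimately have "limitin \<tau> (\<lambda>n. (1 / r) *\<^sub>R (T r (S n) - S n))
      ((1 / r) *\<^sub>R (T r (orbit_integral x h) - orbit_integral x h)) sequentially"
    by (intro limitin_\<tau>_scaleR_diff)
  then have "((\<lambda>n. q ((1 / r) *\<^sub>R (T r (S n) - S n) -
      (1 / r) *\<^sub>R (T r (orbit_integral x h) - orbit_integral x h))) \<longlongrightarrow> 0) sequentially"
    using q unfolding limitin_\<tau>_iff by blast
  then have "((\<lambda>n. q ((1 / r) *\<^sub>R (T r (S n) - S n) - v)) \<longlongrightarrow>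
      q ((1 / r) *\<^sub>R (T r (orbit_integral x h) - orbit_integral x h) - v)) sequentially"
    by (rule seminorm_tendsto_shift[OF seminorm_\<Gamma>\<tau>[OF q]])
  moreover have "\<forall>\<^sub>F n in sequentially. (h * q v / r) * inverse (real (Suc n)) < e / 2"
    using tendsto_mult_right_zero[OF LIMSEQ_inverse_real_of_nat, of "h * q v / r"] e
    by (intro order_tendstoD(2)) auto
  then have "\<forall>\<^sub>F n in sequentially. q ((1 / r) *\<^sub>R (T r (S n) - S n) - v) \<le> \<beta> + e"
    using shift_error_vanishes[OF h r q half_gt_zero[OF e], of x]
  proof eventually_elim
    case (elim n)
    have "(h / real (Suc n)) / r * q v = (h * q v / r) * inverse (real (Suc n))"
      by (simp add: field_simps)
    then show ?case
      using riemann_sum_difference_quotient_le[OF h r _ seminorm_\<Gamma>\<tau>[OF q] dev, of "Suc n"] elim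
      unfolding S_def by linarith
  qed
  ultimately show "q ((1 / r) *\<^sub>R (T r (orbit_integral x h) - orbit_integral x h) - v) \<le> \<beta> + e"
    by (rule tendsto_upperbound) simp
qed

lemma orbit_integral_difference_quotient_bounded:
  assumes h: "h > 0"
  shows "bdd_above ((\<lambda>r. norm (T r (orbit_integral x h) - orbit_integral x h) / r) ` {0<..1})"
proof -
  define I where "I = orbit_integral x h"
  obtain K where K: "K \<ge> 0" "\<And>t w. 0 \<le> t \<Longrightarrow> t \<le> h + 1 \<Longrightarrow> norm (T t w) \<le> K * norm w"
    using T_norm_bound by blast
  have "norm ((1 / r) *\<^sub>R (T r I - I)) \<le> 2 * K * norm x" if r: "r \<in> {0<..1}" for r
  proof (rule norm_le_if_seminorms_le)
    fix q assume q: "q \<in> \<Gamma>\<tau>"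
    have "q (T (h + s) x - T s x - 0) \<le> 2 * K * norm x" if "s \<in> {0..r}" for s
    proof -
      have "q (T (h + s) x - T s x) \<le> norm (T (h + s) x) + norm (T s x)"
        using seminorm_diff_le[OF seminorm_\<Gamma>\<tau>[OF q]] seminorm_le_norm[OF q] by (smt (verit))
      also have "\<dots> \<le> K * norm x + K * norm x" using K(2) that r h by (intro add_mono) auto
      finally show ?thesis by simp
    qed
    from orbit_integral_difference_quotient_le[where r = r, OF h _ q this] r
    show "q ((1 / r) *\<^sub>R (T r I - I)) \<le> 2 * K * norm x" unfolding I_def by simp
  qed
  then show ?thesis unfolding I_def[symmetric] by (intro bdd_aboveI2) auto
qed

lemma limitin_orbit_integral_difference_quotient:
  assumes h: "h > 0"
  shows "limitin \<tau> (\<lambda>r. (1 / r) *\<^sub>R (T r (orbit_integral x h) - orbit_integral x h)) (T h x - x)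
    (at_right 0)"
  unfolding limitin_\<tau>_iff
proof (intro ballI tendstoI)
  fix q and e :: real assume q: "q \<in> \<Gamma>\<tau>" and e: "e > 0"
  then have "e / 4 > 0" by simp
  obtain d1 where d1: "d1 > 0" "\<And>s. s \<ge> 0 \<Longrightarrow> \<bar>s - h\<bar> < d1 \<Longrightarrow> q (T s x - T h x) < e / 4"
    using orbit_continuous[OF q _ \<open>e / 4 > 0\<close>, of h] h by auto
  obtain d0 where d0: "d0 > 0" "\<And>s. s \<ge> 0 \<Longrightarrow> \<bar>s - 0\<bar> < d0 \<Longrightarrow> q (T s x - T 0 x) < e / 4"
    using orbit_continuous[OF q _ \<open>e / 4 > 0\<close>, of 0] by auto
  have "0 < min d0 d1" using d0(1) d1(1) by simp
  from eventually_at_right_real[OF this]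
  show "\<forall>\<^sub>F r in at_right 0.
      dist (q ((1 / r) *\<^sub>R (T r (orbit_integral x h) - orbit_integral x h) - (T h x - x))) 0 < e"
  proof eventually_elim
    case (elim r)
    have "q (T (h + s) x - T s x - (T h x - x)) \<le> e / 4 + e / 4" if "s \<in> {0..r}" for s
    proof -
      have "T (h + s) x - T s x - (T h x - x) = (T (h + s) x - T h x) - (T s x - T 0 x)" by simp
      moreover have "q (T (h + s) x - T h x) < e / 4" "q (T s x - T 0 x) < e / 4"
        using d0(2)[of s] d1(2)[of "h + s"] that elim h by auto
      ultimately show ?thesis using seminorm_diff_le[OF seminorm_\<Gamma>\<tau>[OF q]] by (smt (verit))
    qed
    from orbit_integral_difference_quotient_le[where r = r, OF h _ q this] elim e
    show ?case using seminorm_nonneg[OF seminorm_\<Gamma>\<tau>[OF q]] by simp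
  qed
qed

lemma orbit_integral_in_domain:
  assumes "h > 0"
  shows "orbit_integral x h \<in> D"
  using orbit_integral_difference_quotient_bounded[OF assms, of x]
    limitin_orbit_integral_difference_quotient[OF assms, of x]
  unfolding domain_iff by blast

lemma averaged_orbit_integrals_bounded:
  "bounded (range (\<lambda>m. real (Suc m) *\<^sub>R orbit_integral x (1 / real (Suc m))))"
proof -
  obtain K where K: "K \<ge> 0" "\<And>t w. 0 \<le> t \<Longrightarrow> t \<le> 1 \<Longrightarrow> norm (T t w) \<le> K * norm w"
    using T_norm_bound by blast
  have bound: "norm (orbit_integral x (1 / real (Suc m))) \<le> 1 / real (Suc m) * (K * norm x)" for m
  proof (rule orbit_integral_norm_le)
    have le1: "1 / real (Suc m) \<le> 1" by simp
    show "norm (T t w) \<le> K * norm w" if "0 \<le> t" "t \<le> 1 / real (Suc m)" for t w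
      using K(2)[of t w] that(1) order_trans[OF that(2) le1] by blast
  qed simp
  have "real (Suc m) * norm (orbit_integral x (1 / real (Suc m))) \<le> K * norm x" for m
    using mult_left_mono[OF bound[of m], of "real (Suc m)"] by simp
  then show ?thesis unfolding bounded_iff by auto
qed

lemma averaged_orbit_integrals_limitin:
  "limitin \<tau> (\<lambda>m. real (Suc m) *\<^sub>R orbit_integral x (1 / real (Suc m))) x sequentially"
  unfolding limitin_\<tau>_iff
proof (intro ballI tendstoI)
  fix q and e :: real assume q: "q \<in> \<Gamma>\<tau>" and e: "e > 0"
  then obtain d where d: "d > 0" "\<And>s. s \<ge> 0 \<Longrightarrow> \<bar>s - 0\<bar> < d \<Longrightarrow> q (T s x - T 0 x) < e / 2"
    using orbit_continuous[OF q, of 0 "e / 2"] by auto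
  have "\<forall>\<^sub>F m in sequentially. 1 / real (Suc m) < d"
    using order_tendstoD(2)[OF LIMSEQ_inverse_real_of_nat d(1)] by (simp add: divide_inverse)
  then show "\<forall>\<^sub>F m in sequentially.
      dist (q (real (Suc m) *\<^sub>R orbit_integral x (1 / real (Suc m)) - x)) 0 < e"
  proof eventually_elim
    case (elim m)
    define h where "h = 1 / real (Suc m)"
    have h: "h > 0" "h < d" using elim unfolding h_def by auto
    have "q (T s x - x) \<le> e / 2" if "s \<in> {0..h}" for s
      using d(2)[of s] that h by fastforce
    from orbit_integral_deviation_le[OF h(1) q this]
    have mean: "q (orbit_integral x h - h *\<^sub>R x) \<le> h * (e / 2)" .
    have "real (Suc m) *\<^sub>R orbit_integral x h - x = (1 / h) *\<^sub>R (orbit_integral x h - h *\<^sub>R x)"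
      unfolding h_def by (simp add: algebra_simps)
    then have "q (real (Suc m) *\<^sub>R orbit_integral x h - x) =
        (1 / h) * q (orbit_integral x h - h *\<^sub>R x)"
      using seminorm_scaleR[OF seminorm_\<Gamma>\<tau>[OF q], of "1 / h"] h by simp
    also have "\<dots> \<le> (1 / h) * (h * (e / 2))"
      using mean h by (intro mult_left_mono) auto
    also have "\<dots> = e / 2" using h by simp
    finally have "q (real (Suc m) *\<^sub>R orbit_integral x h - x) \<le> e / 2" .
    then show ?case using e seminorm_nonneg[OF seminorm_\<Gamma>\<tau>[OF q]] unfolding h_def by simp
  qed
qed

subsection \<open>Dissipativity implies equicontinuity\<close>

context
  fixes \<Gamma>\<gamma> :: "('a \<Rightarrow> real) set"
  assumes generates_\<gamma>: "generates \<Gamma>\<gamma> \<gamma>" and seminorm_\<Gamma>\<gamma>: "\<forall>p\<in>\<Gamma>\<gamma>. seminorm p"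
    and dissipative: "dissipative_wrt \<Gamma>\<gamma> D A"
begin

lemma dissipative_step:
  assumes h: "h > 0" and x: "x \<in> D" and p: "p \<in> \<Gamma>\<gamma>"
  shows "p x \<le> p (x - h *\<^sub>R A x)"
proof -
  have "1 / h > 0" using h by simp
  with dissipative x p have "(1 / h) * p x \<le> p ((1 / h) *\<^sub>R x - A x)"
    unfolding dissipative_wrt_def by blast
  then have "p x \<le> h * p ((1 / h) *\<^sub>R x - A x)" using h by (simp add: field_simps)
  also have "\<dots> = p (h *\<^sub>R ((1 / h) *\<^sub>R x - A x))"
    using seminorm_scaleR[of p h] seminorm_\<Gamma>\<gamma> p h by simp
  also have "h *\<^sub>R ((1 / h) *\<^sub>R x - A x) = x - h *\<^sub>R A x" using h by (simp add: algebra_simps)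
  finally show ?thesis .
qed

lemma backward_difference_quotient:
  assumes z: "z \<in> D" and s: "s > 0" and p: "p \<in> \<Gamma>\<gamma>"
  shows "((\<lambda>h. p ((1 / h) *\<^sub>R (T s z - T (s - h) z) - T s (A z))) \<longlongrightarrow> 0) (at_right 0)"
proof -
  define g where "g h = (1 / h) *\<^sub>R (T h z - z)" for h
  obtain b where b: "\<And>h. h \<in> {0<..1} \<Longrightarrow> norm (g h) \<le> b"
    using difference_quotient_bound[OF z] unfolding g_def by blast
  obtain K where K: "K \<ge> 0" "\<And>t w. 0 \<le> t \<Longrightarrow> t \<le> s \<Longrightarrow> norm (T t w) \<le> K * norm w"
    using T_norm_bound by blast
  have "0 < min 1 s" using s by simp
  note near = eventually_at_right_real[OF this]
  have eq: "T (s - h) (g h) = (1 / h) *\<^sub>R (T s z - T (s - h) z)" if "h \<in> {0<..<min 1 s}" for h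
    using that T_add_time[of "s - h" h z] T_scaleR[of "s - h"] T_diff[of "s - h"]
    unfolding g_def by simp
  have "limitin \<tau> g (A z) (at_right 0)" using limitin_generator[OF z] unfolding g_def .
  from limitin_T_backward[OF this b s]
  have "limitin \<tau> (\<lambda>h. T (s - h) (g h)) (T s (A z)) (at_right 0)" .
  then have L: "limitin \<tau> (\<lambda>h. (1 / h) *\<^sub>R (T s z - T (s - h) z)) (T s (A z)) (at_right 0)"
    by (rule limitin_transform_eventually[rotated]) (use near eq in \<open>auto elim: eventually_mono\<close>)
  have "\<forall>\<^sub>F h in at_right 0.
      (1 / h) *\<^sub>R (T s z - T (s - h) z) \<in> insert (T s (A z)) (cball 0 (K * b))"
    using near
  proof eventually_elim
    case (elim h)
    then have "norm (T (s - h) (g h)) \<le> K * norm (g h)" using K(2) by simp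
    also have "\<dots> \<le> K * b" using b elim K(1) by (intro mult_left_mono) auto
    finally show ?case using eq[OF elim] by simp
  qed
  then show ?thesis
    by (intro tendsto_seminorm_if_limitin_\<tau>[OF generates_\<gamma> seminorm_\<Gamma>\<gamma> p _ _ _ L,
        of "insert (T s (A z)) (cball 0 (K * b))"]) simp_all
qed

lemma orbit_seminorm_continuous:
  assumes p: "p \<in> \<Gamma>\<gamma>" and t: "t \<ge> 0"
  shows "continuous_on {0..t} (\<lambda>r. p (T r z))"
  unfolding continuous_on_def
proof
  fix r0 assume r0: "r0 \<in> {0..t}"
  obtain K where K: "K \<ge> 0" "\<And>r w. 0 \<le> r \<Longrightarrow> r \<le> t \<Longrightarrow> norm (T r w) \<le> K * norm w"
    using T_norm_bound by blast
  have "limitin \<tau> (\<lambda>r. T r z) (T r0 z) (at r0 within {0..t})"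
    using tendsto_orbit_within r0 unfolding limitin_\<tau>_iff by auto
  moreover have "\<forall>\<^sub>F r in at r0 within {0..t}. T r z \<in> cball 0 (K * norm z)"
    using K(2) by (auto simp: eventually_at_filter)
  ultimately have "((\<lambda>r. p (T r z - T r0 z)) \<longlongrightarrow> 0) (at r0 within {0..t})"
    using K(2) r0 by (intro tendsto_seminorm_if_limitin_\<tau>[OF generates_\<gamma> seminorm_\<Gamma>\<gamma> p,
        of "cball 0 (K * norm z)"]) auto
  from seminorm_tendsto_shift[OF _ this, of 0] p seminorm_\<Gamma>\<gamma>
  show "((\<lambda>r. p (T r z)) \<longlongrightarrow> p (T r0 z)) (at r0 within {0..t})" by simp
qed

text \<open>On the domain, dissipativity bounds the left Dini derivatives of \<open>s \<mapsto> p (T s z)\<close> by \<open>0\<close>.\<close>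

lemma seminorm_T_le_on_domain:
  assumes z: "z \<in> D" and p: "p \<in> \<Gamma>\<gamma>" and t: "t \<ge> 0"
  shows "p (T t z) \<le> p z"
proof -
  note sp = seminorm_\<Gamma>\<gamma>[rule_format, OF p]
  have "p (T t z) \<le> p (T 0 z)"
  proof (rule left_dini_nonpos_imp_le[OF t orbit_seminorm_continuous[OF p t]])
    fix s e :: real assume s: "s \<in> {0<..t}" and e: "e > 0"
    then have "s > 0" by simp
    then have y: "T s z \<in> D" "A (T s z) = T s (A z)" using domain_invariant[OF z] by auto
    from order_tendstoD(2)[OF backward_difference_quotient[OF z \<open>s > 0\<close> p] e]
    show "\<forall>\<^sub>F h in at_right 0. p (T s z) - p (T (s - h) z) \<le> e * h"
      using eventually_at_right_less[of 0]
    proof eventually_elim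
      case (elim h)
      define E where "E = (1 / h) *\<^sub>R (T s z - T (s - h) z) - T s (A z)"
      have "T s z - h *\<^sub>R A (T s z) = T (s - h) z + h *\<^sub>R E"
        unfolding E_def y(2) using elim by (simp add: algebra_simps)
      then have "p (T s z) \<le> p (T (s - h) z + h *\<^sub>R E)"
        using dissipative_step[OF _ y(1) p, of h] elim by simp
      also have "\<dots> \<le> p (T (s - h) z) + h * p E"
        using seminorm_triangle[OF sp, of "T (s - h) z" "h *\<^sub>R E"]
          seminorm_scaleR[OF sp, of h E] elim
        by simp
      also have "\<dots> \<le> p (T (s - h) z) + h * e"
        using elim unfolding E_def by (intro add_left_mono mult_left_mono) auto
      finally show ?case by (simp add: mult.commute)
    qed
  qed
  then show ?thesis by simp
qed

text \<open>Extend the contractivity from \<open>D\<close> to all of \<open>X\<close> by approximating \<open>x\<close> with the averaged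
  orbit integrals, which converge in \<open>\<gamma>\<close> because they are bounded and converge in \<open>\<tau>\<close>.\<close>

lemma seminorm_T_le:
  assumes p: "p \<in> \<Gamma>\<gamma>" and t: "t \<ge> 0"
  shows "p (T t x) \<le> p x"
proof -
  note sp = seminorm_\<Gamma>\<gamma>[rule_format, OF p]
  define xs where "xs m = real (Suc m) *\<^sub>R orbit_integral x (1 / real (Suc m))" for m
  have L: "limitin \<tau> xs x sequentially" and bd: "bounded (range xs)"
    unfolding xs_def by (rule averaged_orbit_integrals_limitin averaged_orbit_integrals_bounded)+
  obtain C where C: "\<And>m. norm (xs m) \<le> C" using bd unfolding bounded_iff by blast
  obtain K where K: "K \<ge> 0" "\<And>s w. 0 \<le> s \<Longrightarrow> s \<le> t \<Longrightarrow> norm (T s w) \<le> K * norm w"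
    using T_norm_bound by blast
  have TC: "norm (T t (xs m)) \<le> K * C" for m
    using K(2)[OF t order.refl, of "xs m"] mult_left_mono[OF C[of m] K(1)] by simp
  have lim1: "((\<lambda>m. p (xs m - x)) \<longlongrightarrow> 0) sequentially"
    using C by (intro tendsto_seminorm_if_limitin_\<tau>[OF generates_\<gamma> seminorm_\<Gamma>\<gamma> p _ _ _ L,
        of "insert x (cball 0 C)"]) auto
  have lim2: "((\<lambda>m. p (T t (xs m) - T t x)) \<longlongrightarrow> 0) sequentially"
    using TC by (intro tendsto_seminorm_if_limitin_\<tau>[OF generates_\<gamma> seminorm_\<Gamma>\<gamma> p _ _ _
        limitin_T[OF bd L t], of "insert (T t x) (cball 0 (K * C))"]) auto
  have contr: "p (T t (xs m)) \<le> p (xs m)" for m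
    using seminorm_T_le_on_domain[OF orbit_integral_in_domain p t, of "1 / real (Suc m)" x]
      T_scaleR[OF t] seminorm_scaleR[OF sp] unfolding xs_def by simp
  have "p (T t x) \<le> p x + p (xs m - x) + p (T t (xs m) - T t x)" for m
    using contr[of m] seminorm_diff_triangle[OF sp, of "T t x" 0 "T t (xs m)"]
      seminorm_triangle[OF sp, of x "xs m - x"]
      seminorm_minus_commute[OF sp, of "T t x" "T t (xs m)"]
    by simp
  moreover have "((\<lambda>m. p x + p (xs m - x) + p (T t (xs m) - T t x)) \<longlongrightarrow> p x + 0 + 0) sequentially"
    by (intro tendsto_intros lim1 lim2)
  ultimately show ?thesis
    by (intro tendsto_lowerbound[where f = "\<lambda>m. p x + p (xs m - x) + p (T t (xs m) - T t x)"])
      (auto intro: always_eventually)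
qed

lemma dissipative_imp_equicontinuous:
  assumes "directed_seminorms \<Gamma>\<gamma>"
  shows "equicontinuous_semigroup \<gamma> T"
  unfolding equicontinuous_semigroup_def
proof (intro exI[of _ \<Gamma>\<gamma>] conjI assms generates_\<gamma> ballI)
  fix p assume "p \<in> \<Gamma>\<gamma>"
  then show "\<exists>q\<in>\<Gamma>\<gamma>. \<exists>C\<ge>0. \<forall>t\<ge>0. \<forall>x. p (T t x) \<le> C * q x"
    using seminorm_T_le by (intro bexI[of _ p] exI[of _ 1]) auto
qed

end

end

theorem proposition3p23:
  fixes \<Gamma>\<tau> :: "('a::banach \<Rightarrow> real) set"
    and \<tau> \<gamma> :: "'a topology"
    and T :: "real \<Rightarrow> 'a \<Rightarrow> 'a"
    and D :: "'a set" and A :: "'a \<Rightarrow> 'a"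
  assumes "saks_space \<Gamma>\<tau> \<tau>"
    and "mixed_topology \<tau> \<gamma>"
    and "tvs_complete \<gamma>"
    and "C_sequential \<gamma>"
    and "bi_continuous_semigroup \<tau> T"
    and "bi_generator \<tau> T D A"
  shows "equicontinuous_semigroup \<gamma> T \<longleftrightarrow>
         (\<exists>\<Gamma>\<gamma>. directed_seminorms \<Gamma>\<gamma> \<and> generates \<Gamma>\<gamma> \<gamma> \<and> dissipative_wrt \<Gamma>\<gamma> D A)"
proof -
  interpret saks_bi_semigroup \<Gamma>\<tau> \<tau> \<gamma> T D A
    using assms by unfold_locales
  show ?thesis
  proof
    assume "equicontinuous_semigroup \<gamma> T"
    then show "\<exists>\<Gamma>\<gamma>. directed_seminorms \<Gamma>\<gamma> \<and> generates \<Gamma>\<gamma> \<gamma> \<and> dissipative_wrt \<Gamma>\<gamma> D A"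
      by (rule equicontinuous_imp_dissipative)
  next
    assume "\<exists>\<Gamma>\<gamma>. directed_seminorms \<Gamma>\<gamma> \<and> generates \<Gamma>\<gamma> \<gamma> \<and> dissipative_wrt \<Gamma>\<gamma> D A"
    then obtain \<Gamma>\<gamma> where "directed_seminorms \<Gamma>\<gamma>" "generates \<Gamma>\<gamma> \<gamma>" "dissipative_wrt \<Gamma>\<gamma> D A"
      by blast
    then show "equicontinuous_semigroup \<gamma> T"
      by (intro dissipative_imp_equicontinuous) (auto simp: directed_seminorms_def)
  qed
qed

end
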